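(* Let $x_0\in\mathbb{R}$ and $\varpi\in\mathbb{H}_{\mathbb{F}}$. Suppose Assumptions (A1)–(A4) hold. Then the functional $$I[v]=\mathbb{E}\left[\int_0^T \big(L(X_t,v_t)+\varpi_t v_t\big)\,dt+\Psi(X_T)\right],\qquad X_t=x_0+\int_0^t v_s\,ds,$$ is weakly lower semi-continuous on $\mathbb{H}_{\mathbb{F}}$.
   Context: Fix $T>0$ and a complete filtered probability space $(\Omega,\mathcal{F},\mathbb{F},\mathbb{P})$, where $\mathbb{F}$ is the standard filtration generated by a one-dimensional Brownian motion $W$. $\mathbb{H}_{\mathbb{F}}$ denotes the Hilbert space of measurable, $\mathbb{F}$-adapted processes $v:[0,T]\times\Omega\to\mathbb{R}$ with $\mathbb{E}[\int_0^T v_t^2dt]<\infty$, inner product $\langle v,w\rangle=\mathbb{E}[\int_0^Tv_tw_tdt]$. (A1) $L\in C^1(\mathbb{R}^2;[0,\infty))$ and $(x,v)\mapsto L(x,v)$ is convex. (A2) $\Psi\in C^1(\mathbb{R};[0,\infty))$ is convex. (A3) There are $C,\tilde C>0$ with $\Psi(x)\le C(1+|x|^2)$ and $|\Psi'(x)|\le \tilde C(1+|x|)$ for all $x$. (A4) There are $\tilde\beta,C>0$ with $L(x,v)\le\tilde\beta(1+|v|^2)$ and $|L_x(x,v)|,|L_v(x,v)|\le C(1+|v|)$ for all $(x,v)$. *)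

theory Defs
  imports "HOL-Probability.Probability"
begin

definition brownian_motion :: "'a measure \<Rightarrow> (real \<Rightarrow> 'a \<Rightarrow> real) \<Rightarrow> bool" where
  "brownian_motion M W \<longleftrightarrow>
     prob_space M \<and>
     (\<forall>t\<ge>0. W t \<in> borel_measurable M) \<and>
     (AE \<omega> in M. W 0 \<omega> = 0) \<and>
     (AE \<omega> in M. continuous_on {0..} (\<lambda>t. W t \<omega>)) \<and>
     (\<forall>s t. 0 \<le> s \<and> s < t \<longrightarrow>
        distributed M lborel (\<lambda>\<omega>. W t \<omega> - W s \<omega>) (normal_density 0 (sqrt (t - s)))) \<and>
     (\<forall>ts. sorted_wrt (<) ts \<and> (\<forall>t\<in>set ts. 0 \<le> t) \<longrightarrow>
        prob_space.indep_vars M (\<lambda>_. borel)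
          (\<lambda>i \<omega>. W (ts ! Suc i) \<omega> - W (ts ! i) \<omega>) {..<length ts - 1})"

definition complete_space_measure :: "'a measure \<Rightarrow> bool" where
  "complete_space_measure M \<longleftrightarrow> (\<forall>A\<in>null_sets M. \<forall>B\<subseteq>A. B \<in> sets M)"

definition brownian_filtration :: "'a measure \<Rightarrow> (real \<Rightarrow> 'a \<Rightarrow> real) \<Rightarrow> real \<Rightarrow> 'a set set" where
  "brownian_filtration M W t =
     sigma_sets (space M)
       ((\<Union>s\<in>{0..t}. {W s -` B \<inter> space M | B. B \<in> sets borel}) \<union> null_sets M)"

definition time_prod :: "'a measure \<Rightarrow> real \<Rightarrow> (real \<times> 'a) measure" where
  "time_prod M T = restrict_space lborel {0..T} \<Otimes>\<^sub>M M"

text \<open>The space H_F (representatives of its elements).\<close>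
definition H_F :: "'a measure \<Rightarrow> (real \<Rightarrow> 'a set set) \<Rightarrow> real \<Rightarrow> (real \<Rightarrow> 'a \<Rightarrow> real) set" where
  "H_F M F T = {v.
     (\<lambda>(t, \<omega>). v t \<omega>) \<in> borel_measurable (time_prod M T) \<and>
     (\<forall>t\<in>{0..T}. v t \<in> borel_measurable (sigma (space M) (F t))) \<and>
     integrable (time_prod M T) (\<lambda>(t, \<omega>). (v t \<omega>)\<^sup>2)}"

definition H_inner :: "'a measure \<Rightarrow> real \<Rightarrow> (real \<Rightarrow> 'a \<Rightarrow> real) \<Rightarrow> (real \<Rightarrow> 'a \<Rightarrow> real) \<Rightarrow> real" where
  "H_inner M T v w = integral\<^sup>L (time_prod M T) (\<lambda>(t, \<omega>). v t \<omega> * w t \<omega>)"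

definition state :: "real \<Rightarrow> (real \<Rightarrow> 'a \<Rightarrow> real) \<Rightarrow> real \<Rightarrow> 'a \<Rightarrow> real" where
  "state x0 v t \<omega> = x0 + (LINT s:{0..t}|lborel. v s \<omega>)"

definition cost_I :: "'a measure \<Rightarrow> real \<Rightarrow> real \<Rightarrow> (real \<Rightarrow> 'a \<Rightarrow> real) \<Rightarrow>
    (real \<Rightarrow> real \<Rightarrow> real) \<Rightarrow> (real \<Rightarrow> real) \<Rightarrow> (real \<Rightarrow> 'a \<Rightarrow> real) \<Rightarrow> real" where
  "cost_I M T x0 varpi L \<Psi> v =
     (\<integral>\<omega>. (LINT t:{0..T}|lborel. L (state x0 v t \<omega>) (v t \<omega>) + varpi t \<omega> * v t \<omega>)
           + \<Psi> (state x0 v T \<omega>) \<partial>M)"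

definition weakly_lsc_on :: "'b set \<Rightarrow> ('b \<Rightarrow> 'b \<Rightarrow> real) \<Rightarrow> ('b \<Rightarrow> real) \<Rightarrow> bool" where
  "weakly_lsc_on H ip J \<longleftrightarrow>
     (\<forall>vs v. (\<forall>n. vs n \<in> H) \<and> v \<in> H \<and>
        (\<forall>w\<in>H. (\<lambda>n. ip (vs n) w) \<longlonglongrightarrow> ip v w) \<longrightarrow>
        ereal (J v) \<le> liminf (\<lambda>n. ereal (J (vs n))))"

end

(*
  Let v_n converge weakly to v in H_F, put d_n = v_n - v and write X^u for the state of a control u.
  Convexity of L and Psi bounds I[v_n] from below by I[v] plus four correction terms:
  <d_n, L_v(X^v, v)>, <d_n, varpi>, E int_0^T L_x(X^v, v) (X^(v_n) - X^v) dt and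
  E[Psi'(X^v_T) (X^(v_n)_T - X^v_T)], where X^(v_n)_t - X^v_t = int_0^t d_n.
  The first two vanish by weak convergence once L_v(X^v, v) is known to be adapted; this holds because
  int_0^t v is square integrable and a.s. equal to its conditional expectation given F_t.
  The other two are of the form E[xi int_0^t d_n] with xi square integrable but not adapted.
  Replacing xi 1_[0,t] by the adapted step process sum_i 1_(t_i, t_(i+1)] E[xi | F_(t_i)] costs,
  by the orthogonality of conditional expectation increments, an error of order
  sqrt (t / K) * ||d_n|| for a grid of mesh t / K. Weakly convergent sequences are bounded
  (a gliding hump argument in H_F), so these terms vanish too, the time integral by dominated
  convergence.
*)

theory Submission
  imports Defs
begin

section \<open>Square-integrable functions\<close>

lemma square_add_le: "((a::real) + b)\<^sup>2 \<le> 2 * a\<^sup>2 + 2 * b\<^sup>2"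
proof -
  have "0 \<le> (a - b)\<^sup>2" by simp
  then show ?thesis by (simp add: power2_eq_square algebra_simps)
qed

lemma power2_le_of_linear_growth:
  fixes a b C :: real
  assumes "\<bar>b\<bar> \<le> C * (1 + \<bar>a\<bar>)"
  shows "b\<^sup>2 \<le> 2 * C\<^sup>2 + 2 * C\<^sup>2 * a\<^sup>2"
proof -
  have "\<bar>b\<bar> \<le> \<bar>C * (1 + \<bar>a\<bar>)\<bar>" using assms by linarith
  then have "b\<^sup>2 \<le> (C * (1 + \<bar>a\<bar>))\<^sup>2" by (simp add: abs_le_square_iff)
  also have "\<dots> = C\<^sup>2 * (1 + \<bar>a\<bar>)\<^sup>2" by (simp add: power_mult_distrib)
  also have "\<dots> \<le> C\<^sup>2 * (2 + 2 * a\<^sup>2)"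
    using square_add_le[of 1 "\<bar>a\<bar>"] by (intro mult_left_mono) simp_all
  finally show ?thesis by (simp add: algebra_simps)
qed

lemma integrable_square_add:
  fixes f g :: "'b \<Rightarrow> real"
  assumes "f \<in> borel_measurable N" "g \<in> borel_measurable N"
    and "integrable N (\<lambda>x. (f x)\<^sup>2)" "integrable N (\<lambda>x. (g x)\<^sup>2)"
  shows "integrable N (\<lambda>x. (f x + g x)\<^sup>2)"
proof (rule Bochner_Integration.integrable_bound)
  show "integrable N (\<lambda>x. 2 * (f x)\<^sup>2 + 2 * (g x)\<^sup>2)" using assms by simp
  show "AE x in N. norm ((f x + g x)\<^sup>2) \<le> norm (2 * (f x)\<^sup>2 + 2 * (g x)\<^sup>2)"
    using square_add_le by (intro AE_I2) simp
qed (use assms in simp)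

lemma integrable_square_diff:
  fixes f g :: "'b \<Rightarrow> real"
  assumes "f \<in> borel_measurable N" "g \<in> borel_measurable N"
    and "integrable N (\<lambda>x. (f x)\<^sup>2)" "integrable N (\<lambda>x. (g x)\<^sup>2)"
  shows "integrable N (\<lambda>x. (f x - g x)\<^sup>2)"
  using integrable_square_add[of f N "\<lambda>x. - g x"] assms by simp

lemma integrable_mult_of_square_integrable:
  fixes f g :: "'b \<Rightarrow> real"
  assumes "f \<in> borel_measurable N" "g \<in> borel_measurable N"
    and "integrable N (\<lambda>x. (f x)\<^sup>2)" "integrable N (\<lambda>x. (g x)\<^sup>2)"
  shows "integrable N (\<lambda>x. f x * g x)"
proof (rule Bochner_Integration.integrable_bound)
  show "integrable N (\<lambda>x. ((f x)\<^sup>2 + (g x)\<^sup>2) / 2)" using assms by auto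
  show "AE x in N. norm (f x * g x) \<le> norm (((f x)\<^sup>2 + (g x)\<^sup>2) / 2)"
  proof (rule AE_I2)
    fix x
    have "0 \<le> (\<bar>f x\<bar> - \<bar>g x\<bar>)\<^sup>2" by simp
    then show "norm (f x * g x) \<le> norm (((f x)\<^sup>2 + (g x)\<^sup>2) / 2)"
      by (simp add: power2_eq_square abs_mult algebra_simps)
  qed
qed (use assms in auto)

lemma abs_integral_mult_le_Young:
  fixes f g :: "'b \<Rightarrow> real"
  assumes "integrable N (\<lambda>x. (f x)\<^sup>2)" "integrable N (\<lambda>x. (g x)\<^sup>2)"
    and "integrable N (\<lambda>x. f x * g x)" and "e > 0"
  shows "\<bar>\<integral>x. f x * g x \<partial>N\<bar> \<le> (e * (\<integral>x. (f x)\<^sup>2 \<partial>N) + (\<integral>x. (g x)\<^sup>2 \<partial>N) / e) / 2"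
proof -
  have pointwise: "\<bar>f x * g x\<bar> \<le> (e * (f x)\<^sup>2 + (g x)\<^sup>2 / e) / 2" for x
  proof -
    have "0 \<le> (sqrt e * \<bar>f x\<bar> - \<bar>g x\<bar> / sqrt e)\<^sup>2" by simp
    also have "\<dots> = e * (f x)\<^sup>2 - 2 * \<bar>f x * g x\<bar> + (g x)\<^sup>2 / e"
      using \<open>e > 0\<close> by (simp add: power2_diff power_mult_distrib power_divide abs_mult)
    finally show ?thesis by simp
  qed
  have "\<bar>\<integral>x. f x * g x \<partial>N\<bar> \<le> (\<integral>x. \<bar>f x * g x\<bar> \<partial>N)"
    by (rule integral_abs_bound)
  also have "\<dots> \<le> (\<integral>x. (e * (f x)\<^sup>2 + (g x)\<^sup>2 / e) / 2 \<partial>N)"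
    by (rule integral_mono) (use assms pointwise in auto)
  also have "\<dots> = (e * (\<integral>x. (f x)\<^sup>2 \<partial>N) + (\<integral>x. (g x)\<^sup>2 \<partial>N) / e) / 2"
    using assms by simp
  finally show ?thesis .
qed

lemma integral_square_diff:
  fixes f g :: "'b \<Rightarrow> real"
  assumes "f \<in> borel_measurable N" "g \<in> borel_measurable N"
    and "integrable N (\<lambda>x. (f x)\<^sup>2)" "integrable N (\<lambda>x. (g x)\<^sup>2)"
  shows "(\<integral>x. (f x - g x)\<^sup>2 \<partial>N)
           = (\<integral>x. (f x)\<^sup>2 \<partial>N) - 2 * (\<integral>x. f x * g x \<partial>N) + (\<integral>x. (g x)\<^sup>2 \<partial>N)"
proof -
  have fg: "integrable N (\<lambda>x. f x * g x)"
    by (rule integrable_mult_of_square_integrable[OF assms])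
  have "(\<integral>x. (f x - g x)\<^sup>2 \<partial>N) = (\<integral>x. (f x)\<^sup>2 - 2 * (f x * g x) + (g x)\<^sup>2 \<partial>N)"
    by (rule Bochner_Integration.integral_cong) (simp_all add: power2_diff)
  also have "\<dots> = (\<integral>x. (f x)\<^sup>2 \<partial>N) - 2 * (\<integral>x. f x * g x \<partial>N) + (\<integral>x. (g x)\<^sup>2 \<partial>N)"
    using fg assms(3,4) by simp
  finally show ?thesis .
qed

lemma (in finite_measure) square_integrable_imp_integrable:
  fixes f :: "'a \<Rightarrow> real"
  assumes "f \<in> borel_measurable M" "integrable M (\<lambda>x. (f x)\<^sup>2)"
  shows "integrable M f"
proof (rule Bochner_Integration.integrable_bound)
  show "integrable M (\<lambda>x. (1 + (f x)\<^sup>2) / 2)" using assms by auto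
  show "AE x in M. norm (f x) \<le> norm ((1 + (f x)\<^sup>2) / 2)"
  proof (rule AE_I2)
    fix x
    have "0 \<le> (\<bar>f x\<bar> - 1)\<^sup>2" by simp
    then show "norm (f x) \<le> norm ((1 + (f x)\<^sup>2) / 2)"
      by (simp add: power2_eq_square algebra_simps)
  qed
qed (use assms in auto)

lemma (in finite_measure) power2_integral_le:
  fixes f :: "'a \<Rightarrow> real"
  assumes "f \<in> borel_measurable M" "integrable M (\<lambda>x. (f x)\<^sup>2)"
  shows "(\<integral>x. f x \<partial>M)\<^sup>2 \<le> measure M (space M) * (\<integral>x. (f x)\<^sup>2 \<partial>M)"
proof -
  have f: "integrable M f" by (rule square_integrable_imp_integrable[OF assms])
  define m where "m = measure M (space M)"
  define I where "I = (\<integral>x. f x \<partial>M)"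
  show ?thesis
  proof (cases "m = 0")
    case True
    then have "AE x in M. f x = 0"
      unfolding m_def by (intro AE_I[of _ _ "space M"]) (auto simp: emeasure_eq_measure)
    then show ?thesis using True by (simp add: integral_eq_zero_AE)
  next
    case False
    then have "m > 0" unfolding m_def by (simp add: zero_less_measure_iff)
    define c where "c = I / m"
    have "0 \<le> (\<integral>x. (f x - c)\<^sup>2 \<partial>M)" by simp
    also have "(\<integral>x. (f x - c)\<^sup>2 \<partial>M) = (\<integral>x. (f x)\<^sup>2 - 2 * c * f x + c\<^sup>2 \<partial>M)"
      by (simp add: power2_diff algebra_simps)
    also have "\<dots> = (\<integral>x. (f x)\<^sup>2 \<partial>M) - 2 * c * I + c\<^sup>2 * m"
      using assms(2) f unfolding I_def m_def by simp
    also have "\<dots> = (\<integral>x. (f x)\<^sup>2 \<partial>M) - I\<^sup>2 / m"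
      using \<open>m > 0\<close> unfolding c_def by (simp add: power2_eq_square field_simps)
    finally show ?thesis using \<open>m > 0\<close> unfolding I_def[symmetric] m_def[symmetric]
      by (simp add: field_simps)
  qed
qed

lemma (in prob_space) real_cond_exp_square_integrable:
  fixes Z :: "'a \<Rightarrow> real"
  assumes "sigma_finite_subalgebra M G"
    and "Z \<in> borel_measurable M" "integrable M (\<lambda>\<omega>. (Z \<omega>)\<^sup>2)"
  shows "integrable M (\<lambda>\<omega>. (real_cond_exp M G Z \<omega>)\<^sup>2)"
proof -
  interpret G: sigma_finite_subalgebra M G by fact
  have "integrable M Z" by (rule square_integrable_imp_integrable[OF assms(2,3)])
  then have jensen: "AE \<omega> in M. (real_cond_exp M G Z \<omega>)\<^sup>2 \<le> real_cond_exp M G (\<lambda>\<omega>. (Z \<omega>)\<^sup>2) \<omega>"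
    using G.real_cond_exp_jensens_inequality(2)[of Z UNIV _ _ power2] assms convex_power2 by auto
  show ?thesis
  proof (rule Bochner_Integration.integrable_bound)
    show "integrable M (real_cond_exp M G (\<lambda>\<omega>. (Z \<omega>)\<^sup>2))"
      using assms(3) by (rule G.real_cond_exp_int(1))
    show "AE \<omega> in M. norm ((real_cond_exp M G Z \<omega>)\<^sup>2) \<le> norm (real_cond_exp M G (\<lambda>\<omega>. (Z \<omega>)\<^sup>2) \<omega>)"
      using jensen by eventually_elim auto
  qed simp
qed

definition grid_point :: "real \<Rightarrow> nat \<Rightarrow> nat \<Rightarrow> real" where
  "grid_point t K i = real i * t / real K"

(* the first cell also contains 0, so that the first K cells partition {0..t} *)
definition grid_cell :: "real \<Rightarrow> nat \<Rightarrow> nat \<Rightarrow> real set" where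
  "grid_cell t K i =
     (if i = 0 then {0..grid_point t K 1} else {grid_point t K i<..grid_point t K (Suc i)})"

lemma grid_point_nonneg: "0 \<le> t \<Longrightarrow> 0 \<le> grid_point t K i"
  unfolding grid_point_def by simp

lemma grid_point_le: "0 \<le> t \<Longrightarrow> i \<le> K \<Longrightarrow> grid_point t K i \<le> t"
  unfolding grid_point_def by (cases "K = 0") (simp_all add: field_simps mult_left_mono)

lemma grid_point_Suc: "grid_point t K (Suc i) = grid_point t K i + t / K"
  unfolding grid_point_def by (simp add: distrib_right add_divide_distrib)

lemma sets_grid_cell: "grid_cell t K i \<in> sets borel"
  unfolding grid_cell_def by simp

lemma grid_cell_subset:
  "0 \<le> t \<Longrightarrow> grid_cell t K i \<subseteq> {grid_point t K i..grid_point t K (Suc i)}"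
  unfolding grid_cell_def by (auto simp: grid_point_def)

lemma measure_grid_cell: "0 \<le> t \<Longrightarrow> measure lborel (grid_cell t K i) = t / K"
  unfolding grid_cell_def using grid_point_Suc[of t K i] grid_point_Suc[of t K 0]
  by (simp add: grid_point_def)

lemma sum_indicator_grid_cell:
  assumes "0 \<le> t" "0 < K"
  shows "(\<Sum>i<K. indicator (grid_cell t K i) s :: real) = indicator {0..t} s"
proof -
  have "(\<Sum>i<Suc n. indicator (grid_cell t K i) s :: real) = indicator {0..grid_point t K (Suc n)} s" for n
  proof (induction n)
    case (Suc n)
    have "(\<Sum>i<Suc (Suc n). indicator (grid_cell t K i) s :: real) =
          indicator {0..grid_point t K (Suc n)} s + indicator {grid_point t K (Suc n)<..grid_point t K (Suc (Suc n))} s"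
      using Suc.IH by (simp add: grid_cell_def)
    also have "\<dots> = indicator {0..grid_point t K (Suc (Suc n))} s"
      using grid_point_nonneg[OF assms(1), of K "Suc n"] grid_point_Suc[of t K "Suc n"]
        divide_nonneg_nonneg[OF assms(1), of K]
      by (auto simp: indicator_def)
    finally show ?case .
  qed (simp add: grid_cell_def)
  from this[of "K - 1"] show ?thesis
    using assms by (simp add: grid_point_def)
qed

lemma tendsto_zero_of_uniform_approx:
  fixes a :: "nat \<Rightarrow> real"
  assumes "\<And>\<epsilon>. 0 < \<epsilon> \<Longrightarrow> \<exists>b. b \<longlonglongrightarrow> 0 \<and> (\<forall>n. \<bar>a n - b n\<bar> \<le> \<epsilon>)"
  shows "a \<longlonglongrightarrow> 0"
proof (rule LIMSEQ_I)
  fix r :: real assume "0 < r"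
  then obtain b where b: "b \<longlonglongrightarrow> 0" "\<And>n. \<bar>a n - b n\<bar> \<le> r / 2"
    using assms[of "r / 2"] by auto
  obtain N where N: "\<And>n. n \<ge> N \<Longrightarrow> \<bar>b n\<bar> < r / 2"
    using LIMSEQ_D[OF b(1), of "r / 2"] \<open>0 < r\<close> by auto
  have "\<bar>a n\<bar> < r" if "n \<ge> N" for n
    using b(2)[of n] N[OF that] by linarith
  then show "\<exists>N. \<forall>n\<ge>N. norm (a n - 0) < r" by auto
qed

lemma power2_weighted_sum_le:
  fixes c a :: "nat \<Rightarrow> real"
  assumes "\<And>k. 0 \<le> c k"
  shows "(\<Sum>k<m. c k * \<bar>a k\<bar>)\<^sup>2 \<le> (\<Sum>k<m. c k) * (\<Sum>k<m. c k * (a k)\<^sup>2)"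
proof -
  have "(\<Sum>k<m. sqrt (c k) * (sqrt (c k) * \<bar>a k\<bar>))\<^sup>2
          \<le> (\<Sum>k<m. (sqrt (c k))\<^sup>2) * (\<Sum>k<m. (sqrt (c k) * \<bar>a k\<bar>)\<^sup>2)"
    by (rule Cauchy_Schwarz_ineq_sum)
  moreover have "sqrt (c k) * (sqrt (c k) * \<bar>a k\<bar>) = c k * \<bar>a k\<bar>" for k
    using assms by (simp add: mult.assoc[symmetric])
  moreover have "(sqrt (c k) * \<bar>a k\<bar>)\<^sup>2 = c k * (a k)\<^sup>2" for k
    using assms by (simp add: power_mult_distrib)
  ultimately show ?thesis using assms by simp
qed

lemma weighted_series_bound:
  fixes c x :: "nat \<Rightarrow> real"
  assumes c: "\<And>k. 0 \<le> c k" "summable c" and sq: "summable (\<lambda>k. c k * (x k)\<^sup>2)"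
  shows "summable (\<lambda>k. c k * \<bar>x k\<bar>)"
    and "(\<Sum>k. c k * x k)\<^sup>2 \<le> (\<Sum>k. c k) * (\<Sum>k. c k * (x k)\<^sup>2)"
proof -
  have bound: "c k * \<bar>x k\<bar> \<le> (c k + c k * (x k)\<^sup>2) / 2" for k
  proof -
    have "0 \<le> c k * (\<bar>x k\<bar> - 1)\<^sup>2" using c by simp
    then show ?thesis by (simp add: power2_eq_square algebra_simps)
  qed
  have "summable (\<lambda>k. (c k + c k * (x k)\<^sup>2) / 2)"
    using c(2) sq by (intro summable_divide summable_add)
  then show abs: "summable (\<lambda>k. c k * \<bar>x k\<bar>)"
  proof (rule summable_comparison_test')
    show "norm (c k * \<bar>x k\<bar>) \<le> (c k + c k * (x k)\<^sup>2) / 2" for k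
      using bound[of k] c(1)[of k] by simp
  qed
  have "\<bar>\<Sum>k. c k * x k\<bar> \<le> (\<Sum>k. c k * \<bar>x k\<bar>)"
    using summable_rabs[of "\<lambda>k. c k * x k"] abs c by (simp add: abs_mult)
  then have "\<bar>\<Sum>k. c k * x k\<bar>\<^sup>2 \<le> (\<Sum>k. c k * \<bar>x k\<bar>)\<^sup>2"
    by (rule power_mono) simp
  then have "(\<Sum>k. c k * x k)\<^sup>2 \<le> (\<Sum>k. c k * \<bar>x k\<bar>)\<^sup>2"
    by simp
  also have "\<dots> \<le> (\<Sum>k. c k) * (\<Sum>k. c k * (x k)\<^sup>2)"
  proof (rule LIMSEQ_le_const2)
    show "(\<lambda>m. (\<Sum>k<m. c k * \<bar>x k\<bar>)\<^sup>2) \<longlonglongrightarrow> (\<Sum>k. c k * \<bar>x k\<bar>)\<^sup>2"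
      by (intro tendsto_power summable_LIMSEQ abs)
    have "(\<Sum>k<m. c k * \<bar>x k\<bar>)\<^sup>2 \<le> (\<Sum>k. c k) * (\<Sum>k. c k * (x k)\<^sup>2)" for m
    proof -
      have "(\<Sum>k<m. c k * \<bar>x k\<bar>)\<^sup>2 \<le> (\<Sum>k<m. c k) * (\<Sum>k<m. c k * (x k)\<^sup>2)"
        by (rule power2_weighted_sum_le[OF c(1)])
      also have "\<dots> \<le> (\<Sum>k. c k) * (\<Sum>k. c k * (x k)\<^sup>2)"
      proof (rule mult_mono)
        show "(\<Sum>k<m. c k) \<le> (\<Sum>k. c k)"
          by (rule sum_le_suminf[OF c(2)]) (use c(1) in auto)
        show "(\<Sum>k<m. c k * (x k)\<^sup>2) \<le> (\<Sum>k. c k * (x k)\<^sup>2)"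
          by (rule sum_le_suminf[OF sq]) (use c(1) in auto)
        show "0 \<le> (\<Sum>k. c k)" by (rule suminf_nonneg[OF c(2) c(1)])
        show "0 \<le> (\<Sum>k<m. c k * (x k)\<^sup>2)" using c(1) by (simp add: sum_nonneg)
      qed
      finally show ?thesis .
    qed
    then show "\<exists>N. \<forall>m\<ge>N. (\<Sum>k<m. c k * \<bar>x k\<bar>)\<^sup>2 \<le> (\<Sum>k. c k) * (\<Sum>k. c k * (x k)\<^sup>2)"
      by blast
  qed
  finally show "(\<Sum>k. c k * x k)\<^sup>2 \<le> (\<Sum>k. c k) * (\<Sum>k. c k * (x k)\<^sup>2)" .
qed

lemma gliding_hump_lower_bound:
  fixes a S :: "nat \<Rightarrow> real" and D :: real
  assumes "summable a" and aj: "a j = (1/4)^j * D"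
    and aS: "\<And>k. \<bar>a k\<bar> \<le> (1/4)^k * S k" and aD: "\<And>k. \<bar>a k\<bar> \<le> (1/4)^k * D" and "0 \<le> D"
  shows "(2/3) * (1/4)^j * D - (\<Sum>k<j. (1/4)^k * S k) \<le> \<bar>suminf a\<bar>"
proof -
  have split: "suminf a = (\<Sum>i. a (i + Suc j)) + (\<Sum>k<j. a k) + a j"
    using suminf_split_initial_segment[OF \<open>summable a\<close>, of "Suc j"] by simp
  have head: "\<bar>\<Sum>k<j. a k\<bar> \<le> (\<Sum>k<j. (1/4)^k * S k)"
    by (rule order.trans[OF sum_abs sum_mono]) (use aS in auto)
  have geometric: "(\<lambda>i. (1/4::real)^(i + Suc j) * D) sums ((1/4)^j * D / 3)"
  proof -
    have "(\<lambda>i. (1/4::real)^i * ((1/4)^(Suc j) * D)) sums (1 / (1 - 1/4) * ((1/4)^(Suc j) * D))"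
      by (rule sums_mult2[OF geometric_sums]) simp
    moreover have "(1/4::real)^i * ((1/4)^(Suc j) * D) = (1/4)^(i + Suc j) * D" for i
      by (simp add: power_add)
    moreover have "1 / (1 - 1/4) * ((1/4::real)^(Suc j) * D) = (1/4)^j * D / 3"
      by simp
    ultimately show ?thesis by (simp only:)
  qed
  have tail_abs: "summable (\<lambda>i. \<bar>a (i + Suc j)\<bar>)"
  proof (rule summable_comparison_test'[OF sums_summable[OF geometric]])
    show "norm \<bar>a (i + Suc j)\<bar> \<le> (1/4)^(i + Suc j) * D" for i
      using aD[of "i + Suc j"] by simp
  qed
  have "\<bar>\<Sum>i. a (i + Suc j)\<bar> \<le> (\<Sum>i. \<bar>a (i + Suc j)\<bar>)" by (rule summable_rabs[OF tail_abs])
  also have "\<dots> \<le> (\<Sum>i. (1/4::real)^(i + Suc j) * D)"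
    by (rule suminf_le[OF _ tail_abs sums_summable[OF geometric]]) (rule aD)
  also have "\<dots> = (1/4)^j * D / 3"
    by (rule sums_unique[OF geometric, symmetric])
  finally show ?thesis unfolding split aj using head by linarith
qed

lemma convex_on_pair_above_tangent:
  fixes L Lx Lv :: "real \<Rightarrow> real \<Rightarrow> real"
  assumes deriv: "((\<lambda>p. L (fst p) (snd p)) has_derivative (\<lambda>h. Lx x v * fst h + Lv x v * snd h)) (at (x, v))"
    and conv: "convex_on UNIV (\<lambda>p. L (fst p) (snd p))"
  shows "L x v + Lx x v * (x' - x) + Lv x v * (v' - v) \<le> L x' v'"
proof -
  define P where "P s = (x + s * (x' - x), v + s * (v' - v))" for s :: real
  define \<phi> where "\<phi> s = L (fst (P s)) (snd (P s))" for s
  have P_affine: "P ((1 - t) *\<^sub>R a + t *\<^sub>R b) = (1 - t) *\<^sub>R P a + t *\<^sub>R P b" for t a b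
    unfolding P_def by (simp add: algebra_simps)
  have convex: "convex_on UNIV \<phi>"
  proof (rule convex_onI)
    fix t a b :: real assume "0 < t" "t < 1"
    then show "\<phi> ((1 - t) *\<^sub>R a + t *\<^sub>R b) \<le> (1 - t) * \<phi> a + t * \<phi> b"
      using convex_onD[OF conv, of t "P a" "P b"] unfolding \<phi>_def P_affine by simp
  qed simp
  have "(P has_derivative (\<lambda>h. (h * (x' - x), h * (v' - v)))) (at 0)"
    unfolding P_def by (auto intro!: derivative_eq_intros)
  moreover have "P 0 = (x, v)" unfolding P_def by simp
  ultimately have "(\<phi> has_derivative (\<lambda>h. Lx x v * (h * (x' - x)) + Lv x v * (h * (v' - v)))) (at 0)"
    using has_derivative_compose[of P _ 0 UNIV "\<lambda>p. L (fst p) (snd p)"] deriv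
    unfolding \<phi>_def by fastforce
  then have "(\<phi> has_field_derivative (Lx x v * (x' - x) + Lv x v * (v' - v))) (at 0)"
    unfolding has_field_derivative_def
    by (rule has_derivative_eq_rhs) (simp add: fun_eq_iff algebra_simps)
  then have "\<phi> 1 - \<phi> 0 \<ge> (Lx x v * (x' - x) + Lv x v * (v' - v)) * (1 - 0)"
    by (intro convex_on_imp_above_tangent[OF convex]) auto
  then show ?thesis unfolding \<phi>_def P_def by simp
qed

lemma ereal_le_liminf_of_le_add:
  fixes a :: real and b r :: "nat \<Rightarrow> real"
  assumes "\<And>n. a + r n \<le> b n" and "r \<longlonglongrightarrow> 0"
  shows "ereal a \<le> liminf (\<lambda>n. ereal (b n))"
proof -
  have "(\<lambda>n. ereal (a + r n)) \<longlonglongrightarrow> ereal (a + 0)"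
    by (intro tendsto_ereal tendsto_add tendsto_const assms(2))
  then have "liminf (\<lambda>n. ereal (a + r n)) = ereal a"
    by (intro lim_imp_Liminf) simp_all
  moreover have "liminf (\<lambda>n. ereal (a + r n)) \<le> liminf (\<lambda>n. ereal (b n))"
    by (intro Liminf_mono) (simp add: assms(1))
  ultimately show ?thesis by simp
qed

section \<open>Adapted square-integrable processes\<close>

locale augmented_filtration = prob_space M for M :: "'a measure" +
  fixes F :: "real \<Rightarrow> 'a set set" and T :: real
  assumes T_pos: "0 < T"
    and F_subset: "\<And>t. F t \<subseteq> sets M"
    and F_mono: "\<And>s t. s \<le> t \<Longrightarrow> F s \<subseteq> F t"
    and null_sets_subset_F: "\<And>t. null_sets M \<subseteq> F t"
    and sigma_algebra_F: "\<And>t. sigma_algebra (space M) (F t)"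
begin

abbreviation Ft :: "real \<Rightarrow> 'a measure" where
  "Ft t \<equiv> sigma (space M) (F t)"

lemma sets_Ft: "sets (Ft t) = F t"
  by (simp add: sigma_algebra_F sigma_algebra.sets_measure_of_eq)

lemma space_Ft [simp]: "space (Ft t) = space M"
  by (simp add: space_measure_of_conv)

lemma subalgebra_Ft: "subalgebra M (Ft t)"
  unfolding subalgebra_def using sets_Ft F_subset by simp

lemma sigma_finite_subalgebra_Ft: "sigma_finite_subalgebra M (Ft t)"
proof -
  interpret finite_measure_subalgebra M "Ft t"
    by unfold_locales (rule subalgebra_Ft)
  show ?thesis by unfold_locales
qed

lemma measurable_Ft_mono: "s \<le> t \<Longrightarrow> f \<in> borel_measurable (Ft s) \<Longrightarrow> f \<in> borel_measurable (Ft t)"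
  unfolding measurable_def using F_mono sets_Ft by auto

lemma measurable_Ft_imp_measurable: "f \<in> borel_measurable (Ft t) \<Longrightarrow> f \<in> borel_measurable M"
  using measurable_from_subalg subalgebra_Ft by blast

lemma measurable_Ft_AE_eq:
  fixes f g :: "'a \<Rightarrow> real"
  assumes f: "f \<in> borel_measurable M" and g: "g \<in> borel_measurable (Ft t)"
    and ae: "AE \<omega> in M. f \<omega> = g \<omega>"
  shows "f \<in> borel_measurable (Ft t)"
proof -
  define E where "E = {\<omega>\<in>space M. f \<omega> \<noteq> g \<omega>}"
  have "g \<in> borel_measurable M" using measurable_Ft_imp_measurable[OF g] .
  then have "E \<in> sets M" unfolding E_def using f by measurable
  then have E: "E \<in> null_sets M" using ae unfolding E_def by (simp add: AE_iff_null)
  show ?thesis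
  proof (rule borel_measurableI)
    fix S :: "real set" assume S: "open S"
    have "f -` S \<inter> space (Ft t) = ((g -` S \<inter> space M) - E) \<union> (f -` S \<inter> space M \<inter> E)"
      unfolding E_def by auto
    moreover have "g -` S \<inter> space M \<in> F t" using g S sets_Ft[of t] by (auto simp: measurable_def)
    moreover have "E \<in> F t" using null_sets_subset_F E by auto
    moreover have "f -` S \<inter> space M \<inter> E \<in> F t"
    proof -
      have "f -` S \<inter> space M \<in> sets M" using f S by (auto simp: measurable_def)
      then have "f -` S \<inter> space M \<inter> E \<in> null_sets M"
        using E by (metis null_set_Int2 Int_commute)
      then show ?thesis using null_sets_subset_F by auto
    qed
    ultimately show "f -` S \<inter> space (Ft t) \<in> sets (Ft t)"
      by (metis sets_Ft sets.Un sets.Diff)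
  qed
qed

definition lebT :: "real measure" where
  "lebT = restrict_space lborel {0..T}"

lemma space_lebT [simp]: "space lebT = {0..T}"
  unfolding lebT_def by simp

lemma measure_lebT_space: "measure lebT (space lebT) = T"
  unfolding lebT_def using T_pos by (simp add: measure_restrict_space)

lemma measure_lebT: "A \<in> sets borel \<Longrightarrow> A \<subseteq> {0..T} \<Longrightarrow> measure lebT A = measure lborel A"
  unfolding lebT_def by (rule measure_restrict_space) auto

lemma indicator_measurable_lebT: "A \<in> sets borel \<Longrightarrow> (indicator A :: real \<Rightarrow> real) \<in> borel_measurable lebT"
  unfolding lebT_def by (rule measurable_restrict_space1) simp

lemma measurable_ident_lebT [measurable]: "(\<lambda>t. t) \<in> borel_measurable lebT"
  unfolding lebT_def by (rule measurable_restrict_space1) simp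

lemma integrable_indicator_mult_lebT:
  fixes f :: "real \<Rightarrow> real"
  assumes "A \<in> sets borel" "f \<in> borel_measurable lebT" "integrable lebT f"
  shows "integrable lebT (\<lambda>s. indicator A s * f s)"
  by (rule Bochner_Integration.integrable_bound[OF assms(3)])
     (use assms(1,2) indicator_measurable_lebT in \<open>auto simp: indicator_def\<close>)

lemma set_integral_eq_lebT:
  fixes f :: "real \<Rightarrow> real"
  assumes "t \<le> T"
  shows "(LINT s:{0..t}|lborel. f s) = (\<integral>s. indicator {0..t} s * f s \<partial>lebT)"
proof -
  have "(\<integral>s. indicator {0..t} s * f s \<partial>lebT) =
        (\<integral>s. indicator {0..T} s *\<^sub>R (indicator {0..t} s * f s) \<partial>lborel)"
    unfolding lebT_def by (subst integral_restrict_space) auto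
  also have "\<dots> = (\<integral>s. indicator {0..t} s *\<^sub>R f s \<partial>lborel)"
    by (rule Bochner_Integration.integral_cong) (use assms in \<open>auto simp: indicator_def\<close>)
  finally show ?thesis unfolding set_lebesgue_integral_def by simp
qed

sublocale lebT: finite_measure lebT
  by (rule finite_measureI) (use T_pos in \<open>simp add: lebT_def emeasure_restrict_space\<close>)

sublocale lebT_M: pair_sigma_finite lebT M
  by unfold_locales

abbreviation prodT :: "(real \<times> 'a) measure" where
  "prodT \<equiv> lebT \<Otimes>\<^sub>M M"

lemma time_prod_eq: "time_prod M T = prodT"
  unfolding time_prod_def lebT_def ..

sublocale prodT: finite_measure prodT
  by (rule finite_measure_pair_measure) unfold_locales

lemma AE_prodT_time: "AE p in prodT. fst p \<in> {0..T}"
  by (rule AE_I2) (auto simp: space_pair_measure)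

lemma AE_prodT_snd:
  assumes "AE \<omega> in M. P \<omega>"
  shows "AE p in prodT. P (snd p)"
proof -
  obtain N where N: "{\<omega>\<in>space M. \<not> P \<omega>} \<subseteq> N" "emeasure M N = 0" "N \<in> sets M"
    using assms unfolding eventually_ae_filter by auto
  show ?thesis
  proof (rule AE_I[of _ _ "space lebT \<times> N"])
    show "{p \<in> space prodT. \<not> P (snd p)} \<subseteq> space lebT \<times> N"
      using N(1) by (auto simp: space_pair_measure)
    show "emeasure prodT (space lebT \<times> N) = 0"
      using N sets.top[of lebT] by (subst emeasure_pair_measure_Times) (auto simp del: space_lebT)
  qed (intro pair_measureI sets.top N(3))
qed

lemma integrable_prodT_snd:
  fixes f :: "'a \<Rightarrow> real"
  assumes "integrable M f"
  shows "integrable prodT (\<lambda>p. f (snd p))"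
proof (rule lebT_M.Fubini_integrable)
  show "(\<lambda>p. f (snd p)) \<in> borel_measurable prodT" using assms by measurable
qed (use assms in simp_all)

abbreviation \<H> where
  "\<H> \<equiv> H_F M F T"

lemma mem_H_iff: "v \<in> \<H> \<longleftrightarrow> (\<lambda>p. v (fst p) (snd p)) \<in> borel_measurable prodT \<and>
    (\<forall>t\<in>{0..T}. v t \<in> borel_measurable (Ft t)) \<and> integrable prodT (\<lambda>p. (v (fst p) (snd p))\<^sup>2)"
  unfolding H_F_def time_prod_eq by (simp add: split_beta')

lemma H_measurable: "v \<in> \<H> \<Longrightarrow> (\<lambda>p. v (fst p) (snd p)) \<in> borel_measurable prodT"
  and H_adapted: "v \<in> \<H> \<Longrightarrow> t \<in> {0..T} \<Longrightarrow> v t \<in> borel_measurable (Ft t)"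
  and H_square_integrable: "v \<in> \<H> \<Longrightarrow> integrable prodT (\<lambda>p. (v (fst p) (snd p))\<^sup>2)"
  unfolding mem_H_iff by blast+

lemma H_I:
  assumes "(\<lambda>p. v (fst p) (snd p)) \<in> borel_measurable prodT"
    and "\<And>t. t \<in> {0..T} \<Longrightarrow> v t \<in> borel_measurable (Ft t)"
    and "integrable prodT (\<lambda>p. (v (fst p) (snd p))\<^sup>2)"
  shows "v \<in> \<H>"
  using assms unfolding mem_H_iff by blast

lemma H_measurable_time_section:
  "v \<in> \<H> \<Longrightarrow> t \<in> {0..T} \<Longrightarrow> v t \<in> borel_measurable M"
  using measurable_Ft_imp_measurable H_adapted by blast

lemma H_measurable_path:
  "v \<in> \<H> \<Longrightarrow> \<omega> \<in> space M \<Longrightarrow> (\<lambda>s. v s \<omega>) \<in> borel_measurable lebT"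
  using measurable_comp[OF measurable_Pair2' H_measurable] by (simp add: o_def)

lemma H_measurable_swap:
  assumes "v \<in> \<H>"
  shows "(\<lambda>q. v (snd q) (fst q)) \<in> borel_measurable (M \<Otimes>\<^sub>M lebT)"
proof -
  have "(\<lambda>q. (snd q, fst q)) \<in> measurable (M \<Otimes>\<^sub>M lebT) prodT" by measurable
  from measurable_comp[OF this H_measurable[OF assms]] show ?thesis by (simp add: o_def)
qed

lemma integrable_H_mult:
  "v \<in> \<H> \<Longrightarrow> w \<in> \<H> \<Longrightarrow> integrable prodT (\<lambda>p. v (fst p) (snd p) * w (fst p) (snd p))"
  by (rule integrable_mult_of_square_integrable[OF H_measurable H_measurable H_square_integrable H_square_integrable])

lemma H_inner_eq: "H_inner M T v w = (\<integral>p. v (fst p) (snd p) * w (fst p) (snd p) \<partial>prodT)"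
  unfolding H_inner_def time_prod_eq by (simp add: split_beta')

definition path_sqnorm :: "(real \<Rightarrow> 'a \<Rightarrow> real) \<Rightarrow> 'a \<Rightarrow> real" where
  "path_sqnorm v \<omega> = (\<integral>s. (v s \<omega>)\<^sup>2 \<partial>lebT)"

lemma path_sqnorm_nonneg: "0 \<le> path_sqnorm v \<omega>"
  unfolding path_sqnorm_def by simp

lemma AE_path_square_integrable:
  "v \<in> \<H> \<Longrightarrow> AE \<omega> in M. integrable lebT (\<lambda>s. (v s \<omega>)\<^sup>2)"
  using lebT_M.AE_integrable_snd[of "\<lambda>t \<omega>. (v t \<omega>)\<^sup>2"] H_square_integrable
  by (simp add: split_beta')

lemma integrable_path_sqnorm: "v \<in> \<H> \<Longrightarrow> integrable M (path_sqnorm v)"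
  and integral_path_sqnorm:
    "v \<in> \<H> \<Longrightarrow> (\<integral>\<omega>. path_sqnorm v \<omega> \<partial>M) = (\<integral>p. (v (fst p) (snd p))\<^sup>2 \<partial>prodT)"
  using lebT_M.integrable_snd[of "\<lambda>t \<omega>. (v t \<omega>)\<^sup>2"] lebT_M.integral_snd[of "\<lambda>t \<omega>. (v t \<omega>)\<^sup>2"]
    H_square_integrable unfolding path_sqnorm_def by (simp_all add: split_beta')

definition running_integral :: "real \<Rightarrow> (real \<Rightarrow> 'a \<Rightarrow> real) \<Rightarrow> 'a \<Rightarrow> real" where
  "running_integral t v \<omega> = (\<integral>s. indicator {0..t} s * v s \<omega> \<partial>lebT)"

lemma state_eq_running_integral:
  "t \<in> {0..T} \<Longrightarrow> state x0 v t = (\<lambda>\<omega>. x0 + running_integral t v \<omega>)"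
  by (simp add: fun_eq_iff state_def running_integral_def set_integral_eq_lebT)

lemma state_eq_running_integral_prodT:
  "p \<in> space prodT \<Longrightarrow> state x0 v (fst p) (snd p) = x0 + running_integral (fst p) v (snd p)"
  by (simp add: space_pair_measure mem_Times_iff state_eq_running_integral)

lemma running_integral_measurable:
  assumes "v \<in> \<H>"
  shows "running_integral t v \<in> borel_measurable M"
proof -
  have "(\<lambda>(\<omega>, s). indicator {0..t} s * v s \<omega>) \<in> borel_measurable (M \<Otimes>\<^sub>M lebT)"
    using H_measurable_swap[OF assms] by (simp add: split_beta')
  from lebT.borel_measurable_lebesgue_integral[OF this] show ?thesis
    unfolding running_integral_def by simp
qed

lemma running_integral_measurable_prodT:
  assumes "v \<in> \<H>"
  shows "(\<lambda>p. running_integral (fst p) v (snd p)) \<in> borel_measurable prodT"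
proof -
  have "(\<lambda>q. (snd q, snd (fst q))) \<in> measurable (prodT \<Otimes>\<^sub>M lebT) prodT" by measurable
  from measurable_comp[OF this H_measurable[OF assms]]
  have "(\<lambda>q. v (snd q) (snd (fst q))) \<in> borel_measurable (prodT \<Otimes>\<^sub>M lebT)" by (simp add: o_def)
  moreover have "(\<lambda>q. if 0 \<le> snd q \<and> snd q \<le> fst (fst q) then 1 else 0 :: real)
      \<in> borel_measurable (prodT \<Otimes>\<^sub>M lebT)" by measurable
  ultimately have "(\<lambda>(p, s). indicator {0..fst p} s * v s (snd p)) \<in> borel_measurable (prodT \<Otimes>\<^sub>M lebT)"
    by (simp add: split_beta' indicator_def if_distrib)
  from lebT.borel_measurable_lebesgue_integral[OF this] show ?thesis
    unfolding running_integral_def by simp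
qed

lemma state_measurable: "v \<in> \<H> \<Longrightarrow> t \<in> {0..T} \<Longrightarrow> state x0 v t \<in> borel_measurable M"
  using running_integral_measurable by (simp add: state_eq_running_integral)

lemma state_measurable_prodT:
  "v \<in> \<H> \<Longrightarrow> (\<lambda>p. state x0 v (fst p) (snd p)) \<in> borel_measurable prodT"
  using running_integral_measurable_prodT
  by (subst measurable_cong[OF state_eq_running_integral_prodT]) auto

lemma running_integral_square_le:
  assumes v: "v \<in> \<H>" and \<omega>: "\<omega> \<in> space M" and sq: "integrable lebT (\<lambda>s. (v s \<omega>)\<^sup>2)"
  shows "(running_integral t v \<omega>)\<^sup>2 \<le> T * path_sqnorm v \<omega>"
proof -
  have m: "(\<lambda>s. indicator {0..t} s * v s \<omega>) \<in> borel_measurable lebT"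
    using H_measurable_path[OF v \<omega>] indicator_measurable_lebT by (intro borel_measurable_times) auto
  have sq': "integrable lebT (\<lambda>s. (indicator {0..t} s * v s \<omega>)\<^sup>2)"
    by (rule Bochner_Integration.integrable_bound[OF sq])
       (use m in \<open>auto simp: indicator_def power2_eq_square\<close>)
  have "(running_integral t v \<omega>)\<^sup>2 \<le> T * (\<integral>s. (indicator {0..t} s * v s \<omega>)\<^sup>2 \<partial>lebT)"
    using lebT.power2_integral_le[OF m sq'] measure_lebT_space by (simp add: running_integral_def)
  also have "\<dots> \<le> T * path_sqnorm v \<omega>"
    unfolding path_sqnorm_def using T_pos
    by (intro mult_left_mono integral_mono sq' sq) (auto simp: indicator_def)
  finally show ?thesis .
qed

lemma AE_running_integral_square_le:
  assumes "v \<in> \<H>"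
  shows "AE \<omega> in M. \<forall>t. (running_integral t v \<omega>)\<^sup>2 \<le> T * path_sqnorm v \<omega>"
  using AE_space AE_path_square_integrable[OF assms]
  by eventually_elim (blast intro: running_integral_square_le[OF assms])

lemma running_integral_square_integrable:
  assumes "v \<in> \<H>"
  shows "integrable M (\<lambda>\<omega>. (running_integral t v \<omega>)\<^sup>2)"
proof (rule Bochner_Integration.integrable_bound)
  show "integrable M (\<lambda>\<omega>. T * path_sqnorm v \<omega>)" using integrable_path_sqnorm[OF assms] by simp
  show "AE \<omega> in M. norm ((running_integral t v \<omega>)\<^sup>2) \<le> norm (T * path_sqnorm v \<omega>)"
    using AE_running_integral_square_le[OF assms] by eventually_elim (simp add: abs_of_nonneg path_sqnorm_nonneg T_pos less_imp_le)
qed (use running_integral_measurable[OF assms] in simp)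

lemma integral_running_integral_square_le:
  assumes "v \<in> \<H>"
  shows "(\<integral>\<omega>. (running_integral t v \<omega>)\<^sup>2 \<partial>M) \<le> T * (\<integral>p. (v (fst p) (snd p))\<^sup>2 \<partial>prodT)"
proof -
  have "(\<integral>\<omega>. (running_integral t v \<omega>)\<^sup>2 \<partial>M) \<le> (\<integral>\<omega>. T * path_sqnorm v \<omega> \<partial>M)"
    using running_integral_square_integrable[OF assms] integrable_path_sqnorm[OF assms]
      AE_running_integral_square_le[OF assms]
    by (intro integral_mono_AE) (auto elim: AE_mp)
  then show ?thesis using integral_path_sqnorm[OF assms] by simp
qed

lemma running_integral_square_integrable_prodT:
  assumes "v \<in> \<H>"
  shows "integrable prodT (\<lambda>p. (running_integral (fst p) v (snd p))\<^sup>2)"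
proof (rule Bochner_Integration.integrable_bound)
  show "integrable prodT (\<lambda>p. T * path_sqnorm v (snd p))"
    using integrable_prodT_snd[OF integrable_path_sqnorm[OF assms]] by simp
  show "AE p in prodT. norm ((running_integral (fst p) v (snd p))\<^sup>2) \<le> norm (T * path_sqnorm v (snd p))"
    using AE_prodT_snd[OF AE_running_integral_square_le[OF assms]] by eventually_elim (simp add: abs_of_nonneg path_sqnorm_nonneg T_pos less_imp_le)
qed (use running_integral_measurable_prodT[OF assms] in simp)

lemma state_square_integrable:
  assumes "v \<in> \<H>" "t \<in> {0..T}"
  shows "integrable M (\<lambda>\<omega>. (state x0 v t \<omega>)\<^sup>2)"
  using integrable_square_add[of "\<lambda>_. x0" M "running_integral t v"] assms
    running_integral_measurable running_integral_square_integrable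
  by (simp add: state_eq_running_integral)

lemma state_square_integrable_prodT:
  assumes "v \<in> \<H>"
  shows "integrable prodT (\<lambda>p. (state x0 v (fst p) (snd p))\<^sup>2)"
proof -
  have "integrable prodT (\<lambda>p. (x0 + running_integral (fst p) v (snd p))\<^sup>2)"
    by (rule integrable_square_add) (use assms running_integral_measurable_prodT
        running_integral_square_integrable_prodT in simp_all)
  then show ?thesis
    by (rule Bochner_Integration.integrable_cong[THEN iffD1, OF refl, rotated])
       (simp add: state_eq_running_integral_prodT)
qed

lemma AE_running_integral_diff:
  assumes v: "v \<in> \<H>" and w: "w \<in> \<H>"
  shows "AE \<omega> in M. \<forall>t\<in>{0..T}. running_integral t (\<lambda>s \<omega>. v s \<omega> - w s \<omega>) \<omega>
                                  = running_integral t v \<omega> - running_integral t w \<omega>"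
  using AE_space AE_path_square_integrable[OF v] AE_path_square_integrable[OF w]
proof eventually_elim
  case (elim \<omega>)
  have "integrable lebT (\<lambda>s. indicator {0..t} s * u s \<omega>)" if "u \<in> \<H>"
    "integrable lebT (\<lambda>s. (u s \<omega>)\<^sup>2)" for t u
    using integrable_indicator_mult_lebT[OF _ H_measurable_path lebT.square_integrable_imp_integrable]
      H_measurable_path that elim(1) by simp
  note this[OF v elim(2)] this[OF w elim(3)]
  then show ?case
    unfolding running_integral_def by (simp add: right_diff_distrib)
qed

lemma indicator_mult_H_square_integrable:
  assumes u: "u \<in> \<H>" and A: "A \<in> sets borel"
  shows "integrable prodT (\<lambda>p. (indicator A (fst p) * u (fst p) (snd p))\<^sup>2)"
proof (rule Bochner_Integration.integrable_bound)
  show "integrable prodT (\<lambda>p. (u (fst p) (snd p))\<^sup>2)" using H_square_integrable[OF u] .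
  show "(\<lambda>p. (indicator A (fst p) * u (fst p) (snd p))\<^sup>2) \<in> borel_measurable prodT"
    using H_measurable[OF u] indicator_measurable_lebT[OF A] by measurable
  show "AE p in prodT. norm ((indicator A (fst p) * u (fst p) (snd p))\<^sup>2) \<le> norm ((u (fst p) (snd p))\<^sup>2)"
    by (intro AE_I2) (auto simp: indicator_def)
qed

lemma integrable_indicator_H_mult:
  fixes Y :: "'a \<Rightarrow> real"
  assumes u: "u \<in> \<H>" and Y: "Y \<in> borel_measurable M" "integrable M (\<lambda>\<omega>. (Y \<omega>)\<^sup>2)"
    and A: "A \<in> sets borel"
  shows "integrable prodT (\<lambda>p. indicator A (fst p) * u (fst p) (snd p) * Y (snd p))"
  by (rule integrable_mult_of_square_integrable[OF _ _ indicator_mult_H_square_integrable[OF u A]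
        integrable_prodT_snd[OF Y(2)]])
     (use H_measurable[OF u] indicator_measurable_lebT[OF A] Y(1) in measurable)

lemma integral_indicator_H_mult:
  fixes Y :: "'a \<Rightarrow> real"
  assumes u: "u \<in> \<H>" and Y: "Y \<in> borel_measurable M" "integrable M (\<lambda>\<omega>. (Y \<omega>)\<^sup>2)"
    and A: "A \<in> sets borel"
  shows "(\<integral>p. indicator A (fst p) * u (fst p) (snd p) * Y (snd p) \<partial>prodT) =
         (\<integral>s. indicator A s * (\<integral>\<omega>. u s \<omega> * Y \<omega> \<partial>M) \<partial>lebT)"
proof -
  have "(\<integral>p. indicator A (fst p) * u (fst p) (snd p) * Y (snd p) \<partial>prodT) =
        (\<integral>s. (\<integral>\<omega>. indicator A s * u s \<omega> * Y \<omega> \<partial>M) \<partial>lebT)"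
    using lebT_M.integral_fst[of "\<lambda>s \<omega>. indicator A s * u s \<omega> * Y \<omega>"]
      integrable_indicator_H_mult[OF assms] by (simp add: split_beta')
  then show ?thesis by (simp add: mult.assoc)
qed

lemma integral_mult_running_integral:
  fixes Y :: "'a \<Rightarrow> real"
  assumes v: "v \<in> \<H>" and Y: "Y \<in> borel_measurable M" "integrable M (\<lambda>\<omega>. (Y \<omega>)\<^sup>2)"
  shows "(\<integral>\<omega>. Y \<omega> * running_integral t v \<omega> \<partial>M) =
         (\<integral>p. indicator {0..t} (fst p) * v (fst p) (snd p) * Y (snd p) \<partial>prodT)"
proof -
  have "Y \<omega> * running_integral t v \<omega> = (\<integral>s. indicator {0..t} s * v s \<omega> * Y \<omega> \<partial>lebT)" for \<omega>
    unfolding running_integral_def by (simp add: integral_mult_left_zero mult.commute)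
  then have "(\<integral>\<omega>. Y \<omega> * running_integral t v \<omega> \<partial>M) =
             (\<integral>\<omega>. (\<integral>s. indicator {0..t} s * v s \<omega> * Y \<omega> \<partial>lebT) \<partial>M)"
    by (simp only:)
  also have "\<dots> = (\<integral>p. indicator {0..t} (fst p) * v (fst p) (snd p) * Y (snd p) \<partial>prodT)"
    using lebT_M.integral_snd[of "\<lambda>s \<omega>. indicator {0..t} s * v s \<omega> * Y \<omega>"]
      integrable_indicator_H_mult[OF v Y, of "{0..t}"] by (simp add: split_beta')
  finally show ?thesis .
qed

lemma integral_indicator_H_mult_cond_exp:
  fixes Y :: "'a \<Rightarrow> real"
  assumes u: "u \<in> \<H>" and Y: "Y \<in> borel_measurable M" "integrable M (\<lambda>\<omega>. (Y \<omega>)\<^sup>2)"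
    and A: "A \<in> sets borel" "A \<subseteq> {0..b}" "b \<le> T"
  shows "(\<integral>p. indicator A (fst p) * u (fst p) (snd p) * Y (snd p) \<partial>prodT) =
         (\<integral>p. indicator A (fst p) * u (fst p) (snd p) * real_cond_exp M (Ft b) Y (snd p) \<partial>prodT)"
proof -
  interpret Fb: sigma_finite_subalgebra M "Ft b" by (rule sigma_finite_subalgebra_Ft)
  define C where "C = real_cond_exp M (Ft b) Y"
  have C: "C \<in> borel_measurable M" "integrable M (\<lambda>\<omega>. (C \<omega>)\<^sup>2)"
    unfolding C_def using real_cond_exp_square_integrable[OF sigma_finite_subalgebra_Ft Y] by simp_all
  have "(\<lambda>s. \<integral>\<omega>. u s \<omega> * Z \<omega> \<partial>M) \<in> borel_measurable lebT" if "Z \<in> borel_measurable M" for Z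
  proof -
    have "(\<lambda>(s, \<omega>). u s \<omega> * Z \<omega>) \<in> borel_measurable prodT"
      using H_measurable[OF u] that by (simp add: split_beta')
    then show ?thesis by (rule borel_measurable_lebesgue_integral)
  qed
  moreover have "AE s in lebT. integrable M (\<lambda>\<omega>. (u s \<omega>)\<^sup>2)"
    using lebT_M.AE_integrable_fst[of "\<lambda>s \<omega>. (u s \<omega>)\<^sup>2"] H_square_integrable[OF u]
    by (simp add: split_beta')
  then have "AE s in lebT. indicator A s * (\<integral>\<omega>. u s \<omega> * Y \<omega> \<partial>M) =
                           indicator A s * (\<integral>\<omega>. u s \<omega> * C \<omega> \<partial>M)"
    using AE_space
  proof eventually_elim
    case (elim s)
    show ?case
    proof (cases "s \<in> A")
      case True
      \<comment> \<open>for \<open>s \<le> b\<close> the section \<open>u s\<close> is \<open>F b\<close>-measurable, so it can be moved inside the conditional expectation\<close>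
      have s: "s \<in> {0..T}" using elim(2) by simp
      with True A(2) have "u s \<in> borel_measurable (Ft b)"
        using measurable_Ft_mono[OF _ H_adapted[OF u s]] by auto
      moreover have "integrable M (\<lambda>\<omega>. u s \<omega> * Y \<omega>)"
        by (rule integrable_mult_of_square_integrable[OF H_measurable_time_section[OF u s] Y(1) elim(1) Y(2)])
      ultimately show ?thesis
        unfolding C_def using Fb.real_cond_exp_intg(2)[of "u s" Y] Y by simp
    qed simp
  qed
  ultimately have "(\<integral>s. indicator A s * (\<integral>\<omega>. u s \<omega> * Y \<omega> \<partial>M) \<partial>lebT) =
                   (\<integral>s. indicator A s * (\<integral>\<omega>. u s \<omega> * C \<omega> \<partial>M) \<partial>lebT)"
    using Y(1) C(1) indicator_measurable_lebT[OF A(1)] by (intro integral_cong_AE) auto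
  then show ?thesis
    using integral_indicator_H_mult[OF u Y A(1)] integral_indicator_H_mult[OF u C A(1)]
    unfolding C_def by simp
qed

lemma running_integral_adapted:
  assumes v: "v \<in> \<H>" and t: "t \<in> {0..T}"
  shows "running_integral t v \<in> borel_measurable (Ft t)"
proof -
  interpret Ft: sigma_finite_subalgebra M "Ft t" by (rule sigma_finite_subalgebra_Ft)
  define Z where "Z = running_integral t v"
  define C where "C = real_cond_exp M (Ft t) Z"
  have Z: "Z \<in> borel_measurable M" "integrable M (\<lambda>\<omega>. (Z \<omega>)\<^sup>2)"
    unfolding Z_def using running_integral_measurable running_integral_square_integrable v by auto
  have C: "C \<in> borel_measurable M" "integrable M (\<lambda>\<omega>. (C \<omega>)\<^sup>2)"
    unfolding C_def using real_cond_exp_square_integrable[OF sigma_finite_subalgebra_Ft Z] by simp_all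
  \<comment> \<open>no progressive measurability is available, so we show \<open>Z = C\<close> a.e.:
     \<open>\<integral>Z Z = \<integral>C Z = \<integral>C C\<close>, hence \<open>\<integral>(Z - C)\<^sup>2 = 0\<close>\<close>
  have ZZ: "(\<integral>\<omega>. Z \<omega> * Z \<omega> \<partial>M) = (\<integral>\<omega>. C \<omega> * Z \<omega> \<partial>M)"
    using integral_mult_running_integral[OF v Z] integral_mult_running_integral[OF v C]
      integral_indicator_H_mult_cond_exp[OF v Z, of "{0..t}" t] t
    unfolding Z_def C_def by simp
  have CC: "(\<integral>\<omega>. C \<omega> * C \<omega> \<partial>M) = (\<integral>\<omega>. C \<omega> * Z \<omega> \<partial>M)"
    using Ft.real_cond_exp_intg(2)[of C Z] integrable_mult_of_square_integrable[OF C(1) Z(1) C(2) Z(2)] Z(1)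
    unfolding C_def by simp
  have "(\<integral>\<omega>. (Z \<omega> - C \<omega>)\<^sup>2 \<partial>M) = 0"
    using integral_square_diff[OF Z(1) C(1) Z(2) C(2)] ZZ CC by (simp add: power2_eq_square mult.commute)
  then have "AE \<omega> in M. (Z \<omega> - C \<omega>)\<^sup>2 = 0"
    using integrable_square_diff[OF Z(1) C(1) Z(2) C(2)] by (subst integral_nonneg_eq_0_iff_AE[symmetric]) auto
  then have "AE \<omega> in M. Z \<omega> = C \<omega>" by eventually_elim simp
  from measurable_Ft_AE_eq[OF Z(1) _ this] show ?thesis unfolding Z_def C_def by simp
qed

lemma state_adapted: "v \<in> \<H> \<Longrightarrow> t \<in> {0..T} \<Longrightarrow> state x0 v t \<in> borel_measurable (Ft t)"
  using running_integral_adapted by (simp add: state_eq_running_integral)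

lemma H_add:
  assumes "v \<in> \<H>" "w \<in> \<H>"
  shows "(\<lambda>s \<omega>. v s \<omega> + w s \<omega>) \<in> \<H>"
proof (rule H_I)
  show "(\<lambda>p. v (fst p) (snd p) + w (fst p) (snd p)) \<in> borel_measurable prodT"
    using H_measurable[OF assms(1)] H_measurable[OF assms(2)] by simp
  show "(\<lambda>\<omega>. v t \<omega> + w t \<omega>) \<in> borel_measurable (Ft t)" if "t \<in> {0..T}" for t
    using H_adapted[OF assms(1) that] H_adapted[OF assms(2) that] by simp
  show "integrable prodT (\<lambda>p. (v (fst p) (snd p) + w (fst p) (snd p))\<^sup>2)"
    by (rule integrable_square_add[OF H_measurable H_measurable H_square_integrable H_square_integrable])
       (fact assms)+
qed

lemma H_cmult:
  assumes "v \<in> \<H>"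
  shows "(\<lambda>s \<omega>. c * v s \<omega>) \<in> \<H>"
proof (rule H_I)
  show "(\<lambda>p. c * v (fst p) (snd p)) \<in> borel_measurable prodT"
    using H_measurable[OF assms] by simp
  show "(\<lambda>\<omega>. c * v t \<omega>) \<in> borel_measurable (Ft t)" if "t \<in> {0..T}" for t
    using H_adapted[OF assms that] by simp
  show "integrable prodT (\<lambda>p. (c * v (fst p) (snd p))\<^sup>2)"
    using H_square_integrable[OF assms] by (simp add: power_mult_distrib)
qed

lemma H_diff: "v \<in> \<H> \<Longrightarrow> w \<in> \<H> \<Longrightarrow> (\<lambda>s \<omega>. v s \<omega> - w s \<omega>) \<in> \<H>"
  using H_add[OF _ H_cmult, of v w "-1"] by simp

lemma H_sum:
  assumes "\<And>i. i \<in> I \<Longrightarrow> f i \<in> \<H>"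
  shows "(\<lambda>s \<omega>. \<Sum>i\<in>I. f i s \<omega>) \<in> \<H>"
  using assms
proof (induction I rule: infinite_finite_induct)
  case (insert i I)
  then show ?case using H_add[of "f i" "\<lambda>s \<omega>. \<Sum>i\<in>I. f i s \<omega>"] by simp
qed (auto intro: H_I)

lemma indicator_mult_in_H:
  fixes \<xi> :: "'a \<Rightarrow> real"
  assumes A: "A \<in> sets borel" "\<And>s. s \<in> A \<Longrightarrow> a \<le> s"
    and \<xi>: "\<xi> \<in> borel_measurable (Ft a)" "integrable M (\<lambda>\<omega>. (\<xi> \<omega>)\<^sup>2)"
  shows "(\<lambda>s \<omega>. indicator A s * \<xi> \<omega>) \<in> \<H>"
proof (rule H_I)
  have "\<xi> \<in> borel_measurable M" by (rule measurable_Ft_imp_measurable[OF \<xi>(1)])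
  then show m: "(\<lambda>p. indicator A (fst p) * \<xi> (snd p)) \<in> borel_measurable prodT"
    using indicator_measurable_lebT[OF A(1)] by measurable
  show "(\<lambda>\<omega>. indicator A s * \<xi> \<omega>) \<in> borel_measurable (Ft s)" if "s \<in> {0..T}" for s
    using measurable_Ft_mono[OF A(2) \<xi>(1)] by (cases "s \<in> A") simp_all
  show "integrable prodT (\<lambda>p. (indicator A (fst p) * \<xi> (snd p))\<^sup>2)"
    by (rule Bochner_Integration.integrable_bound[OF integrable_prodT_snd[OF \<xi>(2)]])
       (use m in \<open>auto simp: indicator_def\<close>)
qed

lemma H_inner_diff_left:
  assumes "u \<in> \<H>" "v \<in> \<H>" "w \<in> \<H>"
  shows "H_inner M T (\<lambda>s \<omega>. u s \<omega> - v s \<omega>) w = H_inner M T u w - H_inner M T v w"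
  unfolding H_inner_eq using integrable_H_mult[OF assms(1,3)] integrable_H_mult[OF assms(2,3)]
  by (simp add: left_diff_distrib)

lemma H_inner_cmult_right: "H_inner M T v (\<lambda>s \<omega>. c * u s \<omega>) = c * H_inner M T v u"
  unfolding H_inner_eq by (simp add: mult.left_commute)

definition H_sqnorm :: "(real \<Rightarrow> 'a \<Rightarrow> real) \<Rightarrow> real" where
  "H_sqnorm u = (\<integral>p. (u (fst p) (snd p))\<^sup>2 \<partial>prodT)"

lemma H_sqnorm_nonneg: "0 \<le> H_sqnorm u"
  unfolding H_sqnorm_def by simp

lemma H_inner_self: "H_inner M T u u = H_sqnorm u"
  unfolding H_inner_eq H_sqnorm_def by (simp add: power2_eq_square)

lemma H_sqnorm_cmult: "H_sqnorm (\<lambda>s \<omega>. c * u s \<omega>) = c\<^sup>2 * H_sqnorm u"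
  unfolding H_sqnorm_def by (simp add: power_mult_distrib)

lemma abs_H_inner_le_sqrt_sqnorm:
  assumes "v \<in> \<H>" "w \<in> \<H>" "H_sqnorm w \<le> 1" "0 < H_sqnorm v"
  shows "\<bar>H_inner M T v w\<bar> \<le> sqrt (H_sqnorm v)"
proof -
  define e where "e = 1 / sqrt (H_sqnorm v)"
  have e: "0 < e" unfolding e_def using assms(4) by simp
  have "\<bar>H_inner M T v w\<bar> \<le> (e * H_sqnorm v + H_sqnorm w / e) / 2"
    unfolding H_inner_eq H_sqnorm_def using assms(1,2)
    by (intro abs_integral_mult_le_Young H_square_integrable integrable_H_mult e)
  also have "\<dots> \<le> (e * H_sqnorm v + 1 / e) / 2"
    using assms(3) e by (simp add: divide_right_mono)
  also have "\<dots> = sqrt (H_sqnorm v)"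
    unfolding e_def using assms(4) by (simp add: field_simps)
  finally show ?thesis .
qed

section \<open>Approximation by adapted step processes\<close>

lemma integral_square_cond_exp_le:
  fixes \<xi> :: "'a \<Rightarrow> real"
  assumes \<xi>: "\<xi> \<in> borel_measurable M" "integrable M (\<lambda>\<omega>. (\<xi> \<omega>)\<^sup>2)"
  shows "(\<integral>\<omega>. (real_cond_exp M (Ft a) \<xi> \<omega>)\<^sup>2 \<partial>M) \<le> (\<integral>\<omega>. (\<xi> \<omega>)\<^sup>2 \<partial>M)"
proof -
  interpret Fa: sigma_finite_subalgebra M "Ft a" by (rule sigma_finite_subalgebra_Ft)
  define C where "C = real_cond_exp M (Ft a) \<xi>"
  have C: "C \<in> borel_measurable M" "integrable M (\<lambda>\<omega>. (C \<omega>)\<^sup>2)"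
    unfolding C_def using real_cond_exp_square_integrable[OF sigma_finite_subalgebra_Ft \<xi>] by simp_all
  have C\<xi>: "integrable M (\<lambda>\<omega>. C \<omega> * \<xi> \<omega>)"
    by (rule integrable_mult_of_square_integrable[OF C(1) \<xi>(1) C(2) \<xi>(2)])
  have "(\<integral>\<omega>. (C \<omega>)\<^sup>2 \<partial>M) = (\<integral>\<omega>. C \<omega> * \<xi> \<omega> \<partial>M)"
    using Fa.real_cond_exp_intg(2)[OF C\<xi> _ \<xi>(1)] unfolding C_def by (simp add: power2_eq_square)
  also have "\<dots> \<le> ((\<integral>\<omega>. (C \<omega>)\<^sup>2 \<partial>M) + (\<integral>\<omega>. (\<xi> \<omega>)\<^sup>2 \<partial>M)) / 2"
    using abs_integral_mult_le_Young[OF C(2) \<xi>(2) C\<xi>, of 1] by simp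
  finally show ?thesis unfolding C_def by simp
qed

lemma integral_square_cond_exp_increment:
  fixes \<xi> :: "'a \<Rightarrow> real"
  assumes \<xi>: "\<xi> \<in> borel_measurable M" "integrable M (\<lambda>\<omega>. (\<xi> \<omega>)\<^sup>2)" and "a \<le> b"
  shows "(\<integral>\<omega>. (real_cond_exp M (Ft b) \<xi> \<omega> - real_cond_exp M (Ft a) \<xi> \<omega>)\<^sup>2 \<partial>M) =
         (\<integral>\<omega>. (real_cond_exp M (Ft b) \<xi> \<omega>)\<^sup>2 \<partial>M) - (\<integral>\<omega>. (real_cond_exp M (Ft a) \<xi> \<omega>)\<^sup>2 \<partial>M)"
proof -
  interpret Fa: sigma_finite_subalgebra M "Ft a" by (rule sigma_finite_subalgebra_Ft)
  interpret Fb: sigma_finite_subalgebra M "Ft b" by (rule sigma_finite_subalgebra_Ft)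
  define A where "A = real_cond_exp M (Ft a) \<xi>"
  define B where "B = real_cond_exp M (Ft b) \<xi>"
  have A: "A \<in> borel_measurable M" "integrable M (\<lambda>\<omega>. (A \<omega>)\<^sup>2)"
    unfolding A_def using real_cond_exp_square_integrable[OF sigma_finite_subalgebra_Ft \<xi>] by simp_all
  have B: "B \<in> borel_measurable M" "integrable M (\<lambda>\<omega>. (B \<omega>)\<^sup>2)"
    unfolding B_def using real_cond_exp_square_integrable[OF sigma_finite_subalgebra_Ft \<xi>] by simp_all
  have A\<xi>: "integrable M (\<lambda>\<omega>. A \<omega> * \<xi> \<omega>)"
    by (rule integrable_mult_of_square_integrable[OF A(1) \<xi>(1) A(2) \<xi>(2)])
  have "A \<in> borel_measurable (Ft b)"
    using measurable_Ft_mono[OF \<open>a \<le> b\<close> borel_measurable_cond_exp] unfolding A_def .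
  then have "(\<integral>\<omega>. A \<omega> * B \<omega> \<partial>M) = (\<integral>\<omega>. A \<omega> * \<xi> \<omega> \<partial>M)"
    unfolding B_def using Fb.real_cond_exp_intg(2)[OF A\<xi> _ \<xi>(1)] by blast
  moreover have "(\<integral>\<omega>. A \<omega> * A \<omega> \<partial>M) = (\<integral>\<omega>. A \<omega> * \<xi> \<omega> \<partial>M)"
    using Fa.real_cond_exp_intg(2)[OF A\<xi> _ \<xi>(1)] unfolding A_def by simp
  ultimately show ?thesis
    using integral_square_diff[OF B(1) A(1) B(2) A(2)] unfolding A_def[symmetric] B_def[symmetric]
    by (simp add: power2_eq_square mult.commute)
qed

lemma sum_integral_square_cond_exp_increments_le:
  fixes \<xi> :: "'a \<Rightarrow> real"
  assumes \<xi>: "\<xi> \<in> borel_measurable M" "integrable M (\<lambda>\<omega>. (\<xi> \<omega>)\<^sup>2)"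
    and mono: "\<And>i. \<tau> i \<le> \<tau> (Suc i)"
  shows "(\<Sum>i<K. \<integral>\<omega>. (real_cond_exp M (Ft (\<tau> (Suc i))) \<xi> \<omega> - real_cond_exp M (Ft (\<tau> i)) \<xi> \<omega>)\<^sup>2 \<partial>M)
           \<le> (\<integral>\<omega>. (\<xi> \<omega>)\<^sup>2 \<partial>M)"
proof -
  define E where "E i = (\<integral>\<omega>. (real_cond_exp M (Ft (\<tau> i)) \<xi> \<omega>)\<^sup>2 \<partial>M)" for i
  have "(\<Sum>i<K. \<integral>\<omega>. (real_cond_exp M (Ft (\<tau> (Suc i))) \<xi> \<omega> - real_cond_exp M (Ft (\<tau> i)) \<xi> \<omega>)\<^sup>2 \<partial>M)
        = (\<Sum>i<K. E (Suc i) - E i)"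
    unfolding E_def using integral_square_cond_exp_increment[OF \<xi> mono] by simp
  also have "\<dots> = E K - E 0" by (rule sum_lessThan_telescope)
  also have "\<dots> \<le> E K" unfolding E_def by simp
  also have "\<dots> \<le> (\<integral>\<omega>. (\<xi> \<omega>)\<^sup>2 \<partial>M)"
    unfolding E_def by (rule integral_square_cond_exp_le[OF \<xi>])
  finally show ?thesis .
qed

lemma integrable_indicator_mult_snd:
  fixes g :: "'a \<Rightarrow> real"
  assumes g: "integrable M g" and A: "A \<in> sets borel"
  shows "integrable prodT (\<lambda>p. indicator A (fst p) * g (snd p))"
proof (rule Bochner_Integration.integrable_bound[OF integrable_prodT_snd[OF g]])
  show "(\<lambda>p. indicator A (fst p) * g (snd p)) \<in> borel_measurable prodT"
    using indicator_measurable_lebT[OF A] borel_measurable_integrable[OF g] by measurable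
qed (auto simp: indicator_def)

lemma integral_indicator_mult_snd:
  fixes g :: "'a \<Rightarrow> real"
  assumes g: "integrable M g" and A: "A \<in> sets borel" "A \<subseteq> {0..T}"
  shows "(\<integral>p. indicator A (fst p) * g (snd p) \<partial>prodT) = measure lborel A * (\<integral>\<omega>. g \<omega> \<partial>M)"
proof -
  have "(\<integral>p. indicator A (fst p) * g (snd p) \<partial>prodT) = (\<integral>s. (\<integral>\<omega>. indicator A s * g \<omega> \<partial>M) \<partial>lebT)"
    using lebT_M.integral_fst[of "\<lambda>s \<omega>. indicator A s * g \<omega>"] integrable_indicator_mult_snd[OF g A(1)]
    by (simp add: split_beta')
  also have "\<dots> = measure lebT (A \<inter> space lebT) * (\<integral>\<omega>. g \<omega> \<partial>M)"
    by (simp add: integral_mult_left_zero)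
  also have "measure lebT (A \<inter> space lebT) = measure lborel A"
    using A measure_lebT[OF A] by (simp add: Int_absorb2)
  finally show ?thesis .
qed

lemma abs_integral_indicator_H_mult_le:
  fixes \<Delta> :: "'a \<Rightarrow> real"
  assumes d: "d \<in> \<H>" and \<Delta>: "\<Delta> \<in> borel_measurable M" "integrable M (\<lambda>\<omega>. (\<Delta> \<omega>)\<^sup>2)"
    and A: "A \<in> sets borel" "A \<subseteq> {0..T}" and e: "0 < e"
  shows "\<bar>\<integral>p. indicator A (fst p) * d (fst p) (snd p) * \<Delta> (snd p) \<partial>prodT\<bar>
           \<le> (e * (measure lborel A * (\<integral>\<omega>. (\<Delta> \<omega>)\<^sup>2 \<partial>M))
               + (\<integral>p. indicator A (fst p) * (d (fst p) (snd p))\<^sup>2 \<partial>prodT) / e) / 2"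
proof -
  define f where "f p = indicator A (fst p) * \<Delta> (snd p)" for p
  define g where "g p = indicator A (fst p) * d (fst p) (snd p)" for p
  have f2: "(f p)\<^sup>2 = indicator A (fst p) * (\<Delta> (snd p))\<^sup>2"
    and g2: "(g p)\<^sup>2 = indicator A (fst p) * (d (fst p) (snd p))\<^sup>2"
    and fg: "f p * g p = indicator A (fst p) * d (fst p) (snd p) * \<Delta> (snd p)" for p
    unfolding f_def g_def by (simp_all add: power2_eq_square indicator_def)
  have "\<bar>\<integral>p. f p * g p \<partial>prodT\<bar> \<le> (e * (\<integral>p. (f p)\<^sup>2 \<partial>prodT) + (\<integral>p. (g p)\<^sup>2 \<partial>prodT) / e) / 2"
  proof (rule abs_integral_mult_le_Young[OF _ _ _ e])
    show "integrable prodT (\<lambda>p. (f p)\<^sup>2)"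
      unfolding f2 by (rule integrable_indicator_mult_snd[OF \<Delta>(2) A(1)])
    show "integrable prodT (\<lambda>p. (g p)\<^sup>2)"
      unfolding g_def by (rule indicator_mult_H_square_integrable[OF d A(1)])
    show "integrable prodT (\<lambda>p. f p * g p)"
      unfolding fg by (rule integrable_indicator_H_mult[OF d \<Delta> A(1)])
  qed
  then show ?thesis
    unfolding fg f2 g2 integral_indicator_mult_snd[OF \<Delta>(2) A] .
qed

lemma sum_integral_indicator_square_le:
  assumes d: "d \<in> \<H>" and A: "\<And>i. A i \<in> sets borel"
    and le1: "\<And>s. (\<Sum>i\<in>I. indicator (A i) s :: real) \<le> 1"
  shows "(\<Sum>i\<in>I. \<integral>p. indicator (A i) (fst p) * (d (fst p) (snd p))\<^sup>2 \<partial>prodT) \<le> H_sqnorm d"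
proof -
  have int: "integrable prodT (\<lambda>p. indicator (A i) (fst p) * (d (fst p) (snd p))\<^sup>2)" for i
  proof -
    have "(\<lambda>p. (indicator (A i) (fst p) * d (fst p) (snd p))\<^sup>2) =
          (\<lambda>p. indicator (A i) (fst p) * (d (fst p) (snd p))\<^sup>2)"
      by (simp add: fun_eq_iff power2_eq_square indicator_def)
    with indicator_mult_H_square_integrable[OF d A, of i] show ?thesis by (simp only:)
  qed
  have "(\<Sum>i\<in>I. \<integral>p. indicator (A i) (fst p) * (d (fst p) (snd p))\<^sup>2 \<partial>prodT)
        = (\<integral>p. (\<Sum>i\<in>I. indicator (A i) (fst p)) * (d (fst p) (snd p))\<^sup>2 \<partial>prodT)"
    using int by (simp add: sum_distrib_right)
  also have "\<dots> \<le> H_sqnorm d"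
    unfolding H_sqnorm_def
  proof (rule integral_mono)
    show "integrable prodT (\<lambda>p. (\<Sum>i\<in>I. indicator (A i) (fst p)) * (d (fst p) (snd p))\<^sup>2)"
      using int by (simp add: sum_distrib_right)
    show "(\<Sum>i\<in>I. indicator (A i) (fst p)) * (d (fst p) (snd p))\<^sup>2 \<le> (d (fst p) (snd p))\<^sup>2" for p
      using mult_right_mono[OF le1, of "(d (fst p) (snd p))\<^sup>2"] by simp
  qed (rule H_square_integrable[OF d])
  finally show ?thesis .
qed

lemma integral_H_mult_indicator_sum:
  assumes d: "d \<in> \<H>" and Y: "\<And>i. Y i \<in> borel_measurable M" "\<And>i. integrable M (\<lambda>\<omega>. (Y i \<omega>)\<^sup>2)"
    and A: "\<And>i. A i \<in> sets borel"
  shows "(\<integral>p. d (fst p) (snd p) * (\<Sum>i\<in>I. indicator (A i) (fst p) * Y i (snd p)) \<partial>prodT) =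
         (\<Sum>i\<in>I. \<integral>p. indicator (A i) (fst p) * d (fst p) (snd p) * Y i (snd p) \<partial>prodT)"
proof -
  have "d (fst p) (snd p) * (\<Sum>i\<in>I. indicator (A i) (fst p) * Y i (snd p)) =
        (\<Sum>i\<in>I. indicator (A i) (fst p) * d (fst p) (snd p) * Y i (snd p))" for p
    by (simp add: sum_distrib_left mult_ac)
  then show ?thesis
    using integrable_indicator_H_mult[OF d Y A] by (simp del: sum_mult_indicator)
qed

definition step_cond_exp :: "real \<Rightarrow> nat \<Rightarrow> ('a \<Rightarrow> real) \<Rightarrow> real \<Rightarrow> 'a \<Rightarrow> real" where
  "step_cond_exp t K \<xi> s \<omega> =
     (\<Sum>i<K. indicator (grid_cell t K i) s * real_cond_exp M (Ft (grid_point t K i)) \<xi> \<omega>)"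

lemma step_cond_exp_in_H:
  fixes \<xi> :: "'a \<Rightarrow> real"
  assumes \<xi>: "\<xi> \<in> borel_measurable M" "integrable M (\<lambda>\<omega>. (\<xi> \<omega>)\<^sup>2)" and t: "0 \<le> t"
  shows "step_cond_exp t K \<xi> \<in> \<H>"
  unfolding step_cond_exp_def
proof (rule H_sum, rule indicator_mult_in_H)
  fix i
  show "grid_cell t K i \<in> sets borel" by (rule sets_grid_cell)
  show "grid_point t K i \<le> s" if "s \<in> grid_cell t K i" for s
    using grid_cell_subset[OF t, of K i] that by auto
  show "real_cond_exp M (Ft (grid_point t K i)) \<xi> \<in> borel_measurable (Ft (grid_point t K i))"
    by (rule borel_measurable_cond_exp)
  show "integrable M (\<lambda>\<omega>. (real_cond_exp M (Ft (grid_point t K i)) \<xi> \<omega>)\<^sup>2)"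
    by (rule real_cond_exp_square_integrable[OF sigma_finite_subalgebra_Ft \<xi>])
qed

lemma integral_indicator_H_mult_minus_step_cond_exp:
  fixes \<xi> :: "'a \<Rightarrow> real"
  assumes d: "d \<in> \<H>" and \<xi>: "\<xi> \<in> borel_measurable M" "integrable M (\<lambda>\<omega>. (\<xi> \<omega>)\<^sup>2)"
    and t: "t \<in> {0..T}" and K: "0 < K"
  defines "C i \<equiv> real_cond_exp M (Ft (grid_point t K i)) \<xi>"
  shows "(\<integral>p. indicator {0..t} (fst p) * d (fst p) (snd p) * \<xi> (snd p) \<partial>prodT)
           - H_inner M T d (step_cond_exp t K \<xi>)
         = (\<Sum>i<K. \<integral>p. indicator (grid_cell t K i) (fst p) * d (fst p) (snd p)
                       * (C (Suc i) (snd p) - C i (snd p)) \<partial>prodT)"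
proof -
  have C: "C i \<in> borel_measurable M" "integrable M (\<lambda>\<omega>. (C i \<omega>)\<^sup>2)" for i
    unfolding C_def using real_cond_exp_square_integrable[OF sigma_finite_subalgebra_Ft \<xi>] by simp_all
  have "(\<Sum>i<K. indicator (grid_cell t K i) s * \<xi> \<omega>) = indicator {0..t} s * \<xi> \<omega>" for s \<omega>
    using sum_indicator_grid_cell[of t K s] t K by (simp add: sum_distrib_right[symmetric])
  then have "indicator {0..t} (fst p) * d (fst p) (snd p) * \<xi> (snd p) =
        d (fst p) (snd p) * (\<Sum>i<K. indicator (grid_cell t K i) (fst p) * \<xi> (snd p))" for p
    by (simp only: mult_ac)
  then have "(\<integral>p. indicator {0..t} (fst p) * d (fst p) (snd p) * \<xi> (snd p) \<partial>prodT) =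
             (\<integral>p. d (fst p) (snd p) * (\<Sum>i<K. indicator (grid_cell t K i) (fst p) * \<xi> (snd p)) \<partial>prodT)"
    by (simp only:)
  also have "\<dots> = (\<Sum>i<K. \<integral>p. indicator (grid_cell t K i) (fst p) * d (fst p) (snd p) * \<xi> (snd p) \<partial>prodT)"
    by (rule integral_H_mult_indicator_sum[where Y="\<lambda>_. \<xi>", OF d \<xi> sets_grid_cell])
  \<comment> \<open>on the \<open>i\<close>-th cell \<open>d\<close> is adapted to the filtration at the right end point\<close>
  also have "\<dots> = (\<Sum>i<K. \<integral>p. indicator (grid_cell t K i) (fst p) * d (fst p) (snd p) * C (Suc i) (snd p) \<partial>prodT)"
    unfolding C_def
  proof (intro sum.cong refl integral_indicator_H_mult_cond_exp[OF d \<xi> sets_grid_cell])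
    fix i assume "i \<in> {..<K}"
    then show "grid_cell t K i \<subseteq> {0..grid_point t K (Suc i)}" "grid_point t K (Suc i) \<le> T"
      using grid_cell_subset[of t K i] grid_point_nonneg[of t K i] grid_point_le[of t "Suc i" K] t
      by auto
  qed
  moreover have "H_inner M T d (step_cond_exp t K \<xi>) =
      (\<Sum>i<K. \<integral>p. indicator (grid_cell t K i) (fst p) * d (fst p) (snd p) * C i (snd p) \<partial>prodT)"
    unfolding H_inner_eq step_cond_exp_def C_def[symmetric]
    by (rule integral_H_mult_indicator_sum[OF d C sets_grid_cell])
  ultimately show ?thesis
    using integrable_indicator_H_mult[OF d C sets_grid_cell]
    by (simp add: right_diff_distrib sum_subtractf)
qed

lemma abs_integral_indicator_H_mult_minus_step_cond_exp_le:
  fixes \<xi> :: "'a \<Rightarrow> real"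
  assumes d: "d \<in> \<H>" and \<xi>: "\<xi> \<in> borel_measurable M" "integrable M (\<lambda>\<omega>. (\<xi> \<omega>)\<^sup>2)"
    and t: "t \<in> {0..T}" and K: "0 < K" and e: "0 < e"
  shows "\<bar>(\<integral>p. indicator {0..t} (fst p) * d (fst p) (snd p) * \<xi> (snd p) \<partial>prodT)
            - H_inner M T d (step_cond_exp t K \<xi>)\<bar>
           \<le> (e * (t / K) * (\<integral>\<omega>. (\<xi> \<omega>)\<^sup>2 \<partial>M) + H_sqnorm d / e) / 2"
proof -
  define C where "C i = real_cond_exp M (Ft (grid_point t K i)) \<xi>" for i
  define \<Delta> where "\<Delta> i \<omega> = C (Suc i) \<omega> - C i \<omega>" for i \<omega>
  define D where "D i = (\<integral>p. indicator (grid_cell t K i) (fst p) * (d (fst p) (snd p))\<^sup>2 \<partial>prodT)" for i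
  have \<Delta>: "\<Delta> i \<in> borel_measurable M" "integrable M (\<lambda>\<omega>. (\<Delta> i \<omega>)\<^sup>2)" for i
    unfolding \<Delta>_def C_def
    using real_cond_exp_square_integrable[OF sigma_finite_subalgebra_Ft \<xi>]
    by (auto intro: integrable_square_diff)
  have cell: "grid_cell t K i \<subseteq> {0..T}" if "i < K" for i
    using grid_cell_subset[of t K i] grid_point_nonneg[of t K i] grid_point_le[of t "Suc i" K] t that
    by auto
  have "\<bar>(\<integral>p. indicator {0..t} (fst p) * d (fst p) (snd p) * \<xi> (snd p) \<partial>prodT)
          - H_inner M T d (step_cond_exp t K \<xi>)\<bar>
        \<le> (\<Sum>i<K. \<bar>\<integral>p. indicator (grid_cell t K i) (fst p) * d (fst p) (snd p) * \<Delta> i (snd p) \<partial>prodT\<bar>)"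
    unfolding integral_indicator_H_mult_minus_step_cond_exp[OF d \<xi> t K] \<Delta>_def C_def
    by (rule sum_abs)
  also have "\<dots> \<le> (\<Sum>i<K. (e * (t / K * (\<integral>\<omega>. (\<Delta> i \<omega>)\<^sup>2 \<partial>M)) + D i / e) / 2)"
    using abs_integral_indicator_H_mult_le[OF d \<Delta> sets_grid_cell cell e] measure_grid_cell t
    unfolding D_def by (intro sum_mono) auto
  also have "\<dots> = (e * (t / K) * (\<Sum>i<K. \<integral>\<omega>. (\<Delta> i \<omega>)\<^sup>2 \<partial>M) + (\<Sum>i<K. D i) / e) / 2"
    by (simp add: sum_divide_distrib sum_distrib_left sum.distrib add_divide_distrib mult.assoc)
  also have "\<dots> \<le> (e * (t / K) * (\<integral>\<omega>. (\<xi> \<omega>)\<^sup>2 \<partial>M) + H_sqnorm d / e) / 2"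
  proof -
    have "(\<Sum>i<K. \<integral>\<omega>. (\<Delta> i \<omega>)\<^sup>2 \<partial>M) \<le> (\<integral>\<omega>. (\<xi> \<omega>)\<^sup>2 \<partial>M)"
      unfolding \<Delta>_def C_def
      by (rule sum_integral_square_cond_exp_increments_le[OF \<xi>])
         (use grid_point_Suc[of t K] t in simp)
    moreover have "(\<Sum>i<K. D i) \<le> H_sqnorm d"
      unfolding D_def using sum_indicator_grid_cell[of t K] t K
      by (intro sum_integral_indicator_square_le[OF d sets_grid_cell]) (simp add: indicator_def)
    ultimately show ?thesis
      using e t by (intro divide_right_mono add_mono mult_left_mono) (auto simp: divide_right_mono)
  qed
  finally show ?thesis .
qed

definition weakly_null :: "(nat \<Rightarrow> real \<Rightarrow> 'a \<Rightarrow> real) \<Rightarrow> bool" where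
  "weakly_null d \<longleftrightarrow> (\<forall>n. d n \<in> \<H>) \<and> (\<forall>w\<in>\<H>. (\<lambda>n. H_inner M T (d n) w) \<longlonglongrightarrow> 0)"

lemma tendsto_integral_indicator_H_mult:
  fixes \<xi> :: "'a \<Rightarrow> real"
  assumes d: "weakly_null d" and B: "\<And>n. H_sqnorm (d n) \<le> B"
    and \<xi>: "\<xi> \<in> borel_measurable M" "integrable M (\<lambda>\<omega>. (\<xi> \<omega>)\<^sup>2)" and t: "t \<in> {0..T}"
  shows "(\<lambda>n. \<integral>p. indicator {0..t} (fst p) * d n (fst p) (snd p) * \<xi> (snd p) \<partial>prodT) \<longlonglongrightarrow> 0"
proof (rule tendsto_zero_of_uniform_approx)
  fix \<epsilon> :: real assume "0 < \<epsilon>"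
  define X where "X = (\<integral>\<omega>. (\<xi> \<omega>)\<^sup>2 \<partial>M)"
  define e where "e = (\<bar>B\<bar> + 1) / \<epsilon>"
  define K where "K = nat \<lceil>e * t * X / \<epsilon>\<rceil> + 1"
  have e: "0 < e" and K: "0 < K" unfolding e_def K_def using \<open>0 < \<epsilon>\<close> by simp_all
  \<comment> \<open>\<open>e\<close> balances the two error terms, and the mesh \<open>t / K\<close> then makes the first one small\<close>
  have err1: "e * (t / K) * X \<le> \<epsilon>"
  proof -
    have "e * t * X / \<epsilon> \<le> K" unfolding K_def by linarith
    then show ?thesis using \<open>0 < \<epsilon>\<close> K by (simp add: field_simps)
  qed
  have err2: "H_sqnorm (d n) / e \<le> \<epsilon>" for n
  proof -
    have "H_sqnorm (d n) / (\<bar>B\<bar> + 1) \<le> 1" using B[of n] by simp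
    from mult_left_mono[OF this less_imp_le[OF \<open>0 < \<epsilon>\<close>]] show ?thesis
      unfolding e_def by (simp add: field_simps)
  qed
  have "\<bar>(\<integral>p. indicator {0..t} (fst p) * d n (fst p) (snd p) * \<xi> (snd p) \<partial>prodT)
          - H_inner M T (d n) (step_cond_exp t K \<xi>)\<bar> \<le> \<epsilon>" for n
    using abs_integral_indicator_H_mult_minus_step_cond_exp_le[OF _ \<xi> t K e, of "d n"] d err1 err2[of n]
    unfolding weakly_null_def X_def by fastforce
  moreover have "(\<lambda>n. H_inner M T (d n) (step_cond_exp t K \<xi>)) \<longlonglongrightarrow> 0"
    using d step_cond_exp_in_H[OF \<xi>] t unfolding weakly_null_def by simp
  ultimately show "\<exists>b. b \<longlonglongrightarrow> 0 \<and> (\<forall>n. \<bar>(\<integral>p. indicator {0..t} (fst p) * d n (fst p) (snd p) * \<xi> (snd p) \<partial>prodT) - b n\<bar> \<le> \<epsilon>)"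
    by blast
qed

lemma tendsto_integral_mult_running_integral:
  fixes \<xi> :: "'a \<Rightarrow> real"
  assumes d: "weakly_null d" and B: "\<And>n. H_sqnorm (d n) \<le> B"
    and \<xi>: "\<xi> \<in> borel_measurable M" "integrable M (\<lambda>\<omega>. (\<xi> \<omega>)\<^sup>2)" and t: "t \<in> {0..T}"
  shows "(\<lambda>n. \<integral>\<omega>. \<xi> \<omega> * running_integral t (d n) \<omega> \<partial>M) \<longlonglongrightarrow> 0"
  using tendsto_integral_indicator_H_mult[OF assms] integral_mult_running_integral[OF _ \<xi>] d
  unfolding weakly_null_def by simp

lemma tendsto_integral_mult_running_integral_prodT:
  fixes h :: "real \<times> 'a \<Rightarrow> real"
  assumes h: "h \<in> borel_measurable prodT" "integrable prodT (\<lambda>p. (h p)\<^sup>2)"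
    and d: "weakly_null d" and B: "\<And>n. H_sqnorm (d n) \<le> B"
  shows "(\<lambda>n. \<integral>p. h p * running_integral (fst p) (d n) (snd p) \<partial>prodT) \<longlonglongrightarrow> 0"
proof -
  have dH: "d n \<in> \<H>" for n using d unfolding weakly_null_def by blast
  define f where "f n t = (\<integral>\<omega>. h (t, \<omega>) * running_integral t (d n) \<omega> \<partial>M)" for n t
  have h_sections: "AE t in lebT. integrable M (\<lambda>\<omega>. (h (t, \<omega>))\<^sup>2)"
    using lebT_M.AE_integrable_fst'[OF h(2)] by simp
  have h_section_measurable: "(\<lambda>\<omega>. h (t, \<omega>)) \<in> borel_measurable M" if "t \<in> space lebT" for t
    using measurable_comp[OF measurable_Pair1'[OF that] h(1)] by (simp add: o_def)
  have "integrable prodT (\<lambda>p. h p * running_integral (fst p) (d n) (snd p))" for n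
    by (rule integrable_mult_of_square_integrable[OF h(1) running_integral_measurable_prodT[OF dH]
         h(2) running_integral_square_integrable_prodT[OF dH]])
  then have "(\<integral>p. h p * running_integral (fst p) (d n) (snd p) \<partial>prodT) = (\<integral>t. f n t \<partial>lebT)" for n
    unfolding f_def using lebT_M.integral_fst'[of "\<lambda>p. h p * running_integral (fst p) (d n) (snd p)"] by simp
  moreover have "(\<lambda>n. \<integral>t. f n t \<partial>lebT) \<longlonglongrightarrow> (\<integral>t. 0 \<partial>lebT)"
  \<comment> \<open>pointwise in \<open>t\<close> by the previous lemma, dominated thanks to the uniform bound \<open>B\<close>\<close>
  proof (rule integral_dominated_convergence[where w="\<lambda>t. ((\<integral>\<omega>. (h (t, \<omega>))\<^sup>2 \<partial>M) + T * B) / 2"])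
    show "integrable lebT (\<lambda>t. ((\<integral>\<omega>. (h (t, \<omega>))\<^sup>2 \<partial>M) + T * B) / 2)"
      using lebT_M.integrable_fst'[OF h(2)] by simp
    fix n
    have "(\<lambda>(t, \<omega>). h (t, \<omega>) * running_integral t (d n) \<omega>) \<in> borel_measurable prodT"
      using h(1) running_integral_measurable_prodT[OF dH] by (simp add: split_beta')
    then show "f n \<in> borel_measurable lebT"
      unfolding f_def by (rule borel_measurable_lebesgue_integral)
    show "AE t in lebT. norm (f n t) \<le> ((\<integral>\<omega>. (h (t, \<omega>))\<^sup>2 \<partial>M) + T * B) / 2"
      using h_sections AE_space
    proof eventually_elim
      case (elim t)
      have Z: "running_integral t (d n) \<in> borel_measurable M"
        "integrable M (\<lambda>\<omega>. (running_integral t (d n) \<omega>)\<^sup>2)"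
        using running_integral_measurable running_integral_square_integrable dH by auto
      have "\<bar>f n t\<bar> \<le> (1 * (\<integral>\<omega>. (h (t, \<omega>))\<^sup>2 \<partial>M) + (\<integral>\<omega>. (running_integral t (d n) \<omega>)\<^sup>2 \<partial>M) / 1) / 2"
        unfolding f_def
        by (rule abs_integral_mult_le_Young[OF elim(1) Z(2) integrable_mult_of_square_integrable])
           (use h_section_measurable[OF elim(2)] Z elim(1) in simp_all)
      also have "\<dots> \<le> ((\<integral>\<omega>. (h (t, \<omega>))\<^sup>2 \<partial>M) + T * B) / 2"
        using integral_running_integral_square_le[OF dH, of t n]
          mult_left_mono[OF B[of n, unfolded H_sqnorm_def] less_imp_le[OF T_pos]] by simp
      finally show ?case by simp
    qed
  next
    show "AE t in lebT. (\<lambda>n. f n t) \<longlonglongrightarrow> 0"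
      using h_sections AE_space
    proof eventually_elim
      case (elim t)
      then show ?case
        unfolding f_def
        using tendsto_integral_mult_running_integral[OF d B h_section_measurable elim(1)] by simp
    qed
  qed simp
  ultimately show ?thesis by simp
qed

section \<open>Weakly null sequences are bounded\<close>

context
  fixes u :: "nat \<Rightarrow> real \<Rightarrow> 'a \<Rightarrow> real" and c :: "nat \<Rightarrow> real"
  assumes u: "\<And>k. u k \<in> \<H>" "\<And>k. H_sqnorm (u k) \<le> 1"
    and c: "\<And>k. 0 \<le> c k" "summable c"
begin

lemma AE_summable_weighted_square:
    "AE p in prodT. summable (\<lambda>k. c k * (u k (fst p) (snd p))\<^sup>2)"
  and integrable_suminf_weighted_square:
    "integrable prodT (\<lambda>p. \<Sum>k. c k * (u k (fst p) (snd p))\<^sup>2)"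
proof -
  define f where "f k p = c k * (u k (fst p) (snd p))\<^sup>2" for k p
  have f_measurable: "f k \<in> borel_measurable prodT" for k
    unfolding f_def using H_measurable[OF u(1)] by measurable
  have f_integrable: "integrable prodT (f k)" for k
    unfolding f_def using H_square_integrable[OF u(1)] by simp
  have f_nonneg: "0 \<le> f k p" for k p
    unfolding f_def using c by simp
  have "(\<integral>p. f k p \<partial>prodT) \<le> c k" for k
    unfolding f_def using u(2) c unfolding H_sqnorm_def by (simp add: mult_left_le)
  then have summable_integrals: "summable (\<lambda>k. \<integral>p. f k p \<partial>prodT)"
    using f_nonneg by (intro summable_comparison_test'[OF c(2)]) (simp add: integral_nonneg)
  have "(\<integral>\<^sup>+p. (\<Sum>k. ennreal (f k p)) \<partial>prodT) = (\<Sum>k. \<integral>\<^sup>+p. ennreal (f k p) \<partial>prodT)"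
    by (rule nn_integral_suminf) (use f_measurable in auto)
  also have "\<dots> = (\<Sum>k. ennreal (\<integral>p. f k p \<partial>prodT))"
    by (intro arg_cong[where f=suminf] ext nn_integral_eq_integral f_integrable)
       (use f_nonneg in auto)
  also have "\<dots> \<noteq> \<infinity>"
    using summable_integrals
    by (simp add: suminf_nonneg ennreal_suminf_neq_top integral_nonneg_AE f_nonneg)
  finally have "AE p in prodT. (\<Sum>k. ennreal (f k p)) \<noteq> \<infinity>"
    by (intro nn_integral_PInf_AE) (use f_measurable in auto)
  then have AE_f: "AE p in prodT. summable (\<lambda>k. f k p)"
    by eventually_elim (rule summable_suminf_not_top[OF f_nonneg], simp)
  then show "AE p in prodT. summable (\<lambda>k. c k * (u k (fst p) (snd p))\<^sup>2)"
    unfolding f_def .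
  have "norm (f k p) = f k p" for k p using f_nonneg[of k p] by simp
  then show "integrable prodT (\<lambda>p. \<Sum>k. c k * (u k (fst p) (snd p))\<^sup>2)"
    unfolding f_def[symmetric]
    by (intro integrable_suminf[OF f_integrable]) (use AE_f summable_integrals in simp_all)
qed

lemma H_series: "(\<lambda>s \<omega>. \<Sum>k. c k * u k s \<omega>) \<in> \<H>"
proof (rule H_I)
  show "(\<lambda>p. \<Sum>k. c k * u k (fst p) (snd p)) \<in> borel_measurable prodT"
    using H_measurable[OF u(1)] by measurable
  show "(\<lambda>\<omega>. \<Sum>k. c k * u k t \<omega>) \<in> borel_measurable (Ft t)" if "t \<in> {0..T}" for t
    using H_adapted[OF u(1) that] by measurable
  show "integrable prodT (\<lambda>p. (\<Sum>k. c k * u k (fst p) (snd p))\<^sup>2)"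
  proof (rule Bochner_Integration.integrable_bound)
    show "integrable prodT (\<lambda>p. (\<Sum>k. c k) * (\<Sum>k. c k * (u k (fst p) (snd p))\<^sup>2))"
      using integrable_suminf_weighted_square by simp
    show "AE p in prodT. norm ((\<Sum>k. c k * u k (fst p) (snd p))\<^sup>2)
                          \<le> norm ((\<Sum>k. c k) * (\<Sum>k. c k * (u k (fst p) (snd p))\<^sup>2))"
      using AE_summable_weighted_square
    proof eventually_elim
      case (elim p)
      have "0 \<le> (\<Sum>k. c k) * (\<Sum>k. c k * (u k (fst p) (snd p))\<^sup>2)"
        using c elim by (intro mult_nonneg_nonneg suminf_nonneg) auto
      then show ?case using weighted_series_bound(2)[OF c elim] by simp
    qed
  qed (use H_measurable[OF u(1)] in measurable)
qed

lemma H_inner_series_sums: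
  assumes v: "v \<in> \<H>"
  shows "(\<lambda>k. c k * H_inner M T v (u k)) sums H_inner M T v (\<lambda>s \<omega>. \<Sum>k. c k * u k s \<omega>)"
proof -
  define g where "g k p = c k * (v (fst p) (snd p) * u k (fst p) (snd p))" for k p
  have g_integrable: "integrable prodT (g k)" for k
    unfolding g_def using integrable_H_mult[OF v u(1)] by simp
  have AE_summable_g: "AE p in prodT. summable (\<lambda>k. norm (g k p))"
    using AE_summable_weighted_square
  proof eventually_elim
    case (elim p)
    from summable_mult[OF weighted_series_bound(1)[OF c elim], of "\<bar>v (fst p) (snd p)\<bar>"]
    show ?case unfolding g_def using c by (simp add: abs_mult mult_ac)
  qed
  have int_bound: "(\<integral>p. norm (g k p) \<partial>prodT) \<le> c k * ((H_sqnorm v + 1) / 2)" for k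
  proof -
    have "(\<integral>p. \<bar>v (fst p) (snd p) * u k (fst p) (snd p)\<bar> \<partial>prodT)
          \<le> (\<integral>p. ((v (fst p) (snd p))\<^sup>2 + (u k (fst p) (snd p))\<^sup>2) / 2 \<partial>prodT)"
    proof (rule integral_mono)
      fix p
      have "0 \<le> (\<bar>v (fst p) (snd p)\<bar> - \<bar>u k (fst p) (snd p)\<bar>)\<^sup>2" by simp
      then show "\<bar>v (fst p) (snd p) * u k (fst p) (snd p)\<bar>
                   \<le> ((v (fst p) (snd p))\<^sup>2 + (u k (fst p) (snd p))\<^sup>2) / 2"
        by (simp add: power2_eq_square abs_mult algebra_simps)
    qed (use integrable_H_mult[OF v u(1)] H_square_integrable[OF v] H_square_integrable[OF u(1)] in simp_all)
    also have "\<dots> \<le> (H_sqnorm v + 1) / 2"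
      using H_square_integrable[OF v] H_square_integrable[OF u(1)] u(2)[of k]
      unfolding H_sqnorm_def by simp
    finally have "(\<integral>p. \<bar>v (fst p) (snd p) * u k (fst p) (snd p)\<bar> \<partial>prodT) \<le> (H_sqnorm v + 1) / 2" .
    from mult_left_mono[OF this c(1)] show ?thesis
      unfolding g_def using c(1)[of k] by (simp add: abs_mult)
  qed
  have "summable (\<lambda>k. \<integral>p. norm (g k p) \<partial>prodT)"
  proof (rule summable_comparison_test'[OF summable_mult2[OF c(2), of "(H_sqnorm v + 1) / 2"]])
    fix k
    have "0 \<le> (\<integral>p. norm (g k p) \<partial>prodT)" by simp
    then show "norm (\<integral>p. norm (g k p) \<partial>prodT) \<le> c k * ((H_sqnorm v + 1) / 2)"
      using int_bound[of k] by simp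
  qed
  from sums_integral[OF g_integrable AE_summable_g this]
  have "(\<lambda>k. \<integral>p. g k p \<partial>prodT) sums (\<integral>p. (\<Sum>k. g k p) \<partial>prodT)" .
  moreover have "(\<integral>p. g k p \<partial>prodT) = c k * H_inner M T v (u k)" for k
    unfolding g_def H_inner_eq by simp
  moreover have "(\<integral>p. (\<Sum>k. g k p) \<partial>prodT) = H_inner M T v (\<lambda>s \<omega>. \<Sum>k. c k * u k s \<omega>)"
    unfolding H_inner_eq
  proof (rule integral_cong_AE)
    show "AE p in prodT. (\<Sum>k. g k p) = v (fst p) (snd p) * (\<Sum>k. c k * u k (fst p) (snd p))"
      using AE_summable_weighted_square
    proof eventually_elim
      case (elim p)
      have "\<bar>c k * u k (fst p) (snd p)\<bar> = c k * \<bar>u k (fst p) (snd p)\<bar>" for k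
        using c(1)[of k] by (simp add: abs_mult)
      then have "summable (\<lambda>k. \<bar>c k * u k (fst p) (snd p)\<bar>)"
        using weighted_series_bound(1)[OF c elim] by (simp only:)
      then have "summable (\<lambda>k. c k * u k (fst p) (snd p))"
        by (rule summable_rabs_cancel)
      then have "(\<Sum>k. v (fst p) (snd p) * (c k * u k (fst p) (snd p)))
                 = v (fst p) (snd p) * (\<Sum>k. c k * u k (fst p) (snd p))"
        by (rule suminf_mult)
      then show ?case unfolding g_def by (simp only: mult.left_commute)
    qed
    show "(\<lambda>p. \<Sum>k. g k p) \<in> borel_measurable prodT"
      using borel_measurable_integrable[OF g_integrable] by (rule borel_measurable_suminf)
    show "(\<lambda>p. v (fst p) (snd p) * (\<Sum>k. c k * u k (fst p) (snd p))) \<in> borel_measurable prodT"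
      using H_measurable[OF v] H_measurable[OF H_series] by (rule borel_measurable_times)
  qed
  ultimately show ?thesis by simp
qed

end

lemma H_inner_gliding_hump:
  fixes u :: "nat \<Rightarrow> real \<Rightarrow> 'a \<Rightarrow> real" and S :: "nat \<Rightarrow> real"
  assumes u: "\<And>k. u k \<in> \<H>" "\<And>k. H_sqnorm (u k) \<le> 1"
    and v: "v \<in> \<H>" "0 < H_sqnorm v" "H_inner M T v (u j) = sqrt (H_sqnorm v)"
    and S: "\<And>k. \<bar>H_inner M T v (u k)\<bar> \<le> S k"
  shows "(2/3) * (1/4)^j * sqrt (H_sqnorm v) - (\<Sum>k<j. (1/4)^k * S k)
           \<le> \<bar>H_inner M T v (\<lambda>s \<omega>. \<Sum>k. (1/4)^k * u k s \<omega>)\<bar>"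
proof -
  define a where "a k = (1/4::real)^k * H_inner M T v (u k)" for k
  have sums: "a sums H_inner M T v (\<lambda>s \<omega>. \<Sum>k. (1/4)^k * u k s \<omega>)"
    unfolding a_def by (rule H_inner_series_sums[OF u _ _ v(1)]) (simp_all add: summable_geometric)
  have "\<bar>a k\<bar> \<le> (1/4)^k * S k" "\<bar>a k\<bar> \<le> (1/4)^k * sqrt (H_sqnorm v)" for k
    using S[of k] abs_H_inner_le_sqrt_sqnorm[OF v(1) u(1) u(2) v(2), of k]
    unfolding a_def by (simp_all add: abs_mult)
  moreover have "a j = (1/4)^j * sqrt (H_sqnorm v)"
    unfolding a_def using v(3) by simp
  ultimately have "(2/3) * (1/4)^j * sqrt (H_sqnorm v) - (\<Sum>k<j. (1/4)^k * S k) \<le> \<bar>suminf a\<bar>"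
    by (intro gliding_hump_lower_bound[OF sums_summable[OF sums]]) (simp_all add: H_sqnorm_nonneg)
  then show ?thesis using sums_unique[OF sums] by simp
qed

lemma weakly_null_bounded:
  assumes d: "weakly_null d"
  shows "\<exists>B. \<forall>n. H_sqnorm (d n) \<le> B"
proof (rule ccontr)
  assume unbounded: "\<nexists>B. \<forall>n. H_sqnorm (d n) \<le> B"
  have "\<exists>n. X < sqrt (H_sqnorm (d n)) \<and> 0 < H_sqnorm (d n)" for X
  proof -
    obtain n where n: "X\<^sup>2 < H_sqnorm (d n)" using unbounded by (meson not_le)
    then have "0 < H_sqnorm (d n)" using zero_le_power2[of X] by linarith
    with real_less_rsqrt[OF n] show ?thesis by blast
  qed
  then obtain pick where pick: "\<And>X. X < sqrt (H_sqnorm (d (pick X))) \<and> 0 < H_sqnorm (d (pick X))"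
    by metis
  have dH: "d n \<in> \<H>" for n using d unfolding weakly_null_def by blast
  have "\<exists>S. \<forall>n. \<bar>H_inner M T (d n) w\<bar> \<le> S" if "w \<in> \<H>" for w
  proof -
    have "Bseq (\<lambda>n. H_inner M T (d n) w)"
      using d that unfolding weakly_null_def by (intro convergent_imp_Bseq convergentI) blast
    then show ?thesis unfolding Bseq_def by auto
  qed
  then obtain S where S: "\<And>w n. w \<in> \<H> \<Longrightarrow> \<bar>H_inner M T (d n) w\<bar> \<le> S w"
    by metis
  define unit where "unit n = (\<lambda>s \<omega>. inverse (sqrt (H_sqnorm (d n))) * d n s \<omega>)" for n
  have unit_H: "unit n \<in> \<H>" for n unfolding unit_def by (rule H_cmult[OF dH])
  have unit_sqnorm: "H_sqnorm (unit n) \<le> 1" for n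
    unfolding unit_def H_sqnorm_cmult using H_sqnorm_nonneg[of "d n"]
    by (cases "H_sqnorm (d n) = 0") (simp_all add: power_inverse)
  have H_inner_unit: "H_inner M T (d n) (unit n) = sqrt (H_sqnorm (d n))" if "0 < H_sqnorm (d n)" for n
    unfolding unit_def H_inner_cmult_right H_inner_self using that by (simp add: field_simps)
  \<comment> \<open>choose \<open>n j\<close> so large that the \<open>j\<close>-th hump dominates everything chosen before\<close>
  define next_index where "next_index j R = pick ((3/2) * 4^j * (R + real j))" for j R
  define R where "R = rec_nat 0 (\<lambda>j R. R + (1/4)^j * S (unit (next_index j R)))"
  define n where "n j = next_index j (R j)" for j
  define u where "u j = unit (n j)" for j
  have R_eq: "R j = (\<Sum>k<j. (1/4)^k * S (u k))" for j
    by (induction j) (simp_all add: R_def u_def n_def)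
  define W where "W = (\<lambda>s \<omega>. \<Sum>k. (1/4::real)^k * u k s \<omega>)"
  have W: "W \<in> \<H>"
    unfolding W_def u_def using unit_H unit_sqnorm by (intro H_series) (simp_all add: summable_geometric)
  have "real j < \<bar>H_inner M T (d (n j)) W\<bar>" for j
  proof -
    define D where "D = sqrt (H_sqnorm (d (n j)))"
    have big: "(3/2) * 4^j * (R j + real j) < D" and pos: "0 < H_sqnorm (d (n j))"
      using pick unfolding D_def n_def next_index_def by auto
    have "(2/3) * (1/4)^j * D - R j \<le> \<bar>H_inner M T (d (n j)) W\<bar>"
      unfolding D_def R_eq W_def
      by (rule H_inner_gliding_hump[OF _ _ dH pos])
         (use unit_H unit_sqnorm H_inner_unit[OF pos] S unit_H in \<open>simp_all add: u_def\<close>)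
    moreover have "R j + real j < (2/3) * (1/4)^j * D"
    proof -
      have "(2/3) * (1/4::real)^j * ((3/2) * 4^j * (R j + real j)) = R j + real j"
        by (simp add: power_mult_distrib[symmetric])
      moreover have "(2/3) * (1/4::real)^j * ((3/2) * 4^j * (R j + real j)) < (2/3) * (1/4)^j * D"
        using big by (intro mult_strict_left_mono) simp_all
      ultimately show ?thesis by linarith
    qed
    ultimately show ?thesis by linarith
  qed
  moreover have "\<bar>H_inner M T (d (n j)) W\<bar> \<le> S W" for j
    by (rule S[OF W])
  ultimately have "real (nat \<lceil>S W\<rceil>) < S W" by (meson less_le_trans)
  then show False by linarith
qed

end

section \<open>Lower semicontinuity of the cost\<close>

locale control_problem = augmented_filtration M F T for M :: "'a measure" and F T +
  fixes x0 :: real and varpi :: "real \<Rightarrow> 'a \<Rightarrow> real"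
    and L Lx Lv :: "real \<Rightarrow> real \<Rightarrow> real" and \<Psi> \<Psi>' :: "real \<Rightarrow> real"
    and C\<^sub>\<Psi> C\<^sub>\<Psi>' C\<^sub>L C\<^sub>L' :: real
  assumes varpi: "varpi \<in> H_F M F T"
    and L_deriv: "\<And>x v. ((\<lambda>p. L (fst p) (snd p)) has_derivative
                     (\<lambda>h. Lx x v * fst h + Lv x v * snd h)) (at (x, v))"
    and Lx_cont: "continuous_on UNIV (\<lambda>p. Lx (fst p) (snd p))"
    and Lv_cont: "continuous_on UNIV (\<lambda>p. Lv (fst p) (snd p))"
    and L_nonneg: "\<And>x v. 0 \<le> L x v"
    and L_convex: "convex_on UNIV (\<lambda>p. L (fst p) (snd p))"
    and Psi_deriv: "\<And>x. (\<Psi> has_real_derivative \<Psi>' x) (at x)"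
    and Psi'_cont: "continuous_on UNIV \<Psi>'"
    and Psi_nonneg: "\<And>x. 0 \<le> \<Psi> x"
    and Psi_convex: "convex_on UNIV \<Psi>"
    and Psi_growth: "\<And>x. \<Psi> x \<le> C\<^sub>\<Psi> * (1 + \<bar>x\<bar>\<^sup>2)"
    and Psi'_growth: "\<And>x. \<bar>\<Psi>' x\<bar> \<le> C\<^sub>\<Psi>' * (1 + \<bar>x\<bar>)"
    and L_growth: "\<And>x v. L x v \<le> C\<^sub>L * (1 + \<bar>v\<bar>\<^sup>2)"
    and Lx_growth: "\<And>x v. \<bar>Lx x v\<bar> \<le> C\<^sub>L' * (1 + \<bar>v\<bar>)"
    and Lv_growth: "\<And>x v. \<bar>Lv x v\<bar> \<le> C\<^sub>L' * (1 + \<bar>v\<bar>)"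
begin

lemma L_continuous: "continuous_on UNIV (\<lambda>p. L (fst p) (snd p))"
proof (rule has_derivative_continuous_on)
  show "((\<lambda>p. L (fst p) (snd p)) has_derivative (\<lambda>h. Lx (fst p) (snd p) * fst h + Lv (fst p) (snd p) * snd h))
          (at p within UNIV)" for p
    using L_deriv[of "fst p" "snd p"] by simp
qed

lemma Psi_measurable [measurable]: "\<Psi> \<in> borel_measurable borel"
  using Psi_deriv by (intro borel_measurable_continuous_onI continuous_at_imp_continuous_on ballI DERIV_isCont)

lemma Psi'_measurable [measurable]: "\<Psi>' \<in> borel_measurable borel"
  by (rule borel_measurable_continuous_onI[OF Psi'_cont])

lemma Lagrangian_integrable:
  assumes v: "v \<in> \<H>"
  shows "integrable prodT (\<lambda>p. L (state x0 v (fst p) (snd p)) (v (fst p) (snd p)))"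
proof (rule Bochner_Integration.integrable_bound)
  show "integrable prodT (\<lambda>p. C\<^sub>L * (1 + (v (fst p) (snd p))\<^sup>2))"
    using H_square_integrable[OF v] by simp
  show "AE p in prodT. norm (L (state x0 v (fst p) (snd p)) (v (fst p) (snd p)))
                         \<le> norm (C\<^sub>L * (1 + (v (fst p) (snd p))\<^sup>2))"
    using L_growth L_nonneg order_trans[OF L_nonneg L_growth] by (intro AE_I2) simp
qed (rule borel_measurable_continuous_Pair[OF state_measurable_prodT[OF v] H_measurable[OF v] L_continuous])

lemma terminal_cost_integrable:
  assumes v: "v \<in> \<H>"
  shows "integrable M (\<lambda>\<omega>. \<Psi> (state x0 v T \<omega>))"
proof (rule Bochner_Integration.integrable_bound)
  show "integrable M (\<lambda>\<omega>. C\<^sub>\<Psi> * (1 + (state x0 v T \<omega>)\<^sup>2))"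
    using state_square_integrable[OF v] T_pos by simp
  show "AE \<omega> in M. norm (\<Psi> (state x0 v T \<omega>)) \<le> norm (C\<^sub>\<Psi> * (1 + (state x0 v T \<omega>)\<^sup>2))"
    using Psi_growth Psi_nonneg order_trans[OF Psi_nonneg Psi_growth] by (intro AE_I2) simp
qed (use state_measurable[OF v] T_pos in simp)

lemma square_integrable_linear_growth:
  fixes h :: "real \<Rightarrow> real \<Rightarrow> real"
  assumes v: "v \<in> \<H>" and h: "continuous_on UNIV (\<lambda>p. h (fst p) (snd p))"
    "\<And>x v. \<bar>h x v\<bar> \<le> C * (1 + \<bar>v\<bar>)"
  shows "(\<lambda>p. h (state x0 v (fst p) (snd p)) (v (fst p) (snd p))) \<in> borel_measurable prodT"
    and "integrable prodT (\<lambda>p. (h (state x0 v (fst p) (snd p)) (v (fst p) (snd p)))\<^sup>2)"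
proof -
  show m: "(\<lambda>p. h (state x0 v (fst p) (snd p)) (v (fst p) (snd p))) \<in> borel_measurable prodT"
    by (rule borel_measurable_continuous_Pair[OF state_measurable_prodT[OF v] H_measurable[OF v] h(1)])
  show "integrable prodT (\<lambda>p. (h (state x0 v (fst p) (snd p)) (v (fst p) (snd p)))\<^sup>2)"
  proof (rule Bochner_Integration.integrable_bound)
    show "integrable prodT (\<lambda>p. 2 * C\<^sup>2 + 2 * C\<^sup>2 * (v (fst p) (snd p))\<^sup>2)"
      using H_square_integrable[OF v] by simp
    show "AE p in prodT. norm ((h (state x0 v (fst p) (snd p)) (v (fst p) (snd p)))\<^sup>2)
                           \<le> norm (2 * C\<^sup>2 + 2 * C\<^sup>2 * (v (fst p) (snd p))\<^sup>2)"
      using power2_le_of_linear_growth[OF h(2)] by (intro AE_I2) simp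
  qed (use m in simp)
qed

lemma Psi'_state_square_integrable:
  assumes v: "v \<in> \<H>"
  shows "integrable M (\<lambda>\<omega>. (\<Psi>' (state x0 v T \<omega>))\<^sup>2)"
proof (rule Bochner_Integration.integrable_bound)
  show "integrable M (\<lambda>\<omega>. 2 * C\<^sub>\<Psi>'\<^sup>2 + 2 * C\<^sub>\<Psi>'\<^sup>2 * (state x0 v T \<omega>)\<^sup>2)"
    using state_square_integrable[OF v] T_pos by simp
  show "AE \<omega> in M. norm ((\<Psi>' (state x0 v T \<omega>))\<^sup>2) \<le> norm (2 * C\<^sub>\<Psi>'\<^sup>2 + 2 * C\<^sub>\<Psi>'\<^sup>2 * (state x0 v T \<omega>)\<^sup>2)"
    using power2_le_of_linear_growth[OF Psi'_growth] by (intro AE_I2) simp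
qed (use state_measurable[OF v] T_pos in simp)

lemma Lv_state_in_H:
  assumes v: "v \<in> \<H>"
  shows "(\<lambda>s \<omega>. Lv (state x0 v s \<omega>) (v s \<omega>)) \<in> \<H>"
  using square_integrable_linear_growth[OF v Lv_cont Lv_growth]
    borel_measurable_continuous_Pair[OF state_adapted[OF v] H_adapted[OF v] Lv_cont]
  by (intro H_I) auto

lemma cost_I_eq:
  assumes v: "v \<in> \<H>"
  shows "cost_I M T x0 varpi L \<Psi> v =
    (\<integral>p. L (state x0 v (fst p) (snd p)) (v (fst p) (snd p)) \<partial>prodT)
    + (\<integral>p. varpi (fst p) (snd p) * v (fst p) (snd p) \<partial>prodT)
    + (\<integral>\<omega>. \<Psi> (state x0 v T \<omega>) \<partial>M)"
proof -
  define f where "f t \<omega> = L (state x0 v t \<omega>) (v t \<omega>) + varpi t \<omega> * v t \<omega>" for t \<omega>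
  have f: "integrable prodT (\<lambda>p. f (fst p) (snd p))"
    unfolding f_def using Lagrangian_integrable[OF v] integrable_H_mult[OF varpi v] by simp
  have "(LINT t:{0..T}|lborel. f t \<omega>) = (\<integral>t. indicator {0..T} t * f t \<omega> \<partial>lebT)" for \<omega>
    by (rule set_integral_eq_lebT) simp
  also have "(\<integral>t. indicator {0..T} t * f t \<omega> \<partial>lebT) = (\<integral>t. f t \<omega> \<partial>lebT)" for \<omega>
    by (rule Bochner_Integration.integral_cong) simp_all
  finally have "(LINT t:{0..T}|lborel. f t \<omega>) = (\<integral>t. f t \<omega> \<partial>lebT)" for \<omega> .
  then have "cost_I M T x0 varpi L \<Psi> v = (\<integral>\<omega>. (\<integral>t. f t \<omega> \<partial>lebT) + \<Psi> (state x0 v T \<omega>) \<partial>M)"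
    unfolding cost_I_def f_def[symmetric] by simp
  also have "\<dots> = (\<integral>p. f (fst p) (snd p) \<partial>prodT) + (\<integral>\<omega>. \<Psi> (state x0 v T \<omega>) \<partial>M)"
    using lebT_M.integrable_snd[of f] lebT_M.integral_snd[of f] f terminal_cost_integrable[OF v]
    by (simp add: split_beta')
  finally show ?thesis
    unfolding f_def using Lagrangian_integrable[OF v] integrable_H_mult[OF varpi v] by simp
qed

lemma AE_state_diff:
  assumes "v \<in> \<H>" "v' \<in> \<H>"
  shows "AE \<omega> in M. \<forall>t\<in>{0..T}. state x0 v' t \<omega> - state x0 v t \<omega>
                                  = running_integral t (\<lambda>s \<omega>. v' s \<omega> - v s \<omega>) \<omega>"
  using AE_running_integral_diff[OF assms(2,1)] by eventually_elim (simp add: state_eq_running_integral)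

lemma integral_Lagrangian_above_tangent:
  assumes v: "v \<in> \<H>" and v': "v' \<in> \<H>"
  shows "(\<integral>p. L (state x0 v (fst p) (snd p)) (v (fst p) (snd p)) \<partial>prodT)
         + (\<integral>p. Lx (state x0 v (fst p) (snd p)) (v (fst p) (snd p))
                  * running_integral (fst p) (\<lambda>s \<omega>. v' s \<omega> - v s \<omega>) (snd p) \<partial>prodT)
         + (\<integral>p. Lv (state x0 v (fst p) (snd p)) (v (fst p) (snd p))
                  * (v' (fst p) (snd p) - v (fst p) (snd p)) \<partial>prodT)
         \<le> (\<integral>p. L (state x0 v' (fst p) (snd p)) (v' (fst p) (snd p)) \<partial>prodT)"
proof -
  define X where "X p = state x0 v (fst p) (snd p)" for p
  define X' where "X' p = state x0 v' (fst p) (snd p)" for p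
  define V where "V p = v (fst p) (snd p)" for p
  define V' where "V' p = v' (fst p) (snd p)" for p
  have X_diff: "(\<lambda>p. X' p - X p) \<in> borel_measurable prodT" "integrable prodT (\<lambda>p. (X' p - X p)\<^sup>2)"
    unfolding X_def X'_def
    using state_measurable_prodT[OF v] state_measurable_prodT[OF v'] apply simp
    by (rule integrable_square_diff[OF state_measurable_prodT[OF v'] state_measurable_prodT[OF v]
          state_square_integrable_prodT[OF v'] state_square_integrable_prodT[OF v]])
  have V_diff: "(\<lambda>p. V' p - V p) \<in> borel_measurable prodT" "integrable prodT (\<lambda>p. (V' p - V p)\<^sup>2)"
    unfolding V_def V'_def
    using H_measurable[OF v] H_measurable[OF v'] apply simp
    by (rule integrable_square_diff[OF H_measurable[OF v'] H_measurable[OF v]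
          H_square_integrable[OF v'] H_square_integrable[OF v]])
  note Lx = square_integrable_linear_growth[OF v Lx_cont Lx_growth, folded X_def V_def]
  note Lv = square_integrable_linear_growth[OF v Lv_cont Lv_growth, folded X_def V_def]
  have int_Lx: "integrable prodT (\<lambda>p. Lx (X p) (V p) * (X' p - X p))"
    by (rule integrable_mult_of_square_integrable[OF Lx(1) X_diff(1) Lx(2) X_diff(2)])
  have int_Lv: "integrable prodT (\<lambda>p. Lv (X p) (V p) * (V' p - V p))"
    by (rule integrable_mult_of_square_integrable[OF Lv(1) V_diff(1) Lv(2) V_diff(2)])
  have int_L: "integrable prodT (\<lambda>p. L (X p) (V p))" "integrable prodT (\<lambda>p. L (X' p) (V' p))"
    unfolding X_def X'_def V_def V'_def
    by (rule Lagrangian_integrable[OF v], rule Lagrangian_integrable[OF v'])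
  have "AE p in prodT. running_integral (fst p) (\<lambda>s \<omega>. v' s \<omega> - v s \<omega>) (snd p) = X' p - X p"
    using AE_prodT_snd[OF AE_state_diff[OF v v']] AE_prodT_time
    by eventually_elim (simp add: X_def X'_def)
  then have ri: "(\<integral>p. Lx (X p) (V p) * running_integral (fst p) (\<lambda>s \<omega>. v' s \<omega> - v s \<omega>) (snd p) \<partial>prodT)
        = (\<integral>p. Lx (X p) (V p) * (X' p - X p) \<partial>prodT)"
    by (intro integral_cong_AE borel_measurable_times[OF Lx(1)] X_diff(1)
        running_integral_measurable_prodT[OF H_diff[OF v' v]]) (auto elim: eventually_mono)
  have "(\<integral>p. L (X p) (V p) \<partial>prodT) + (\<integral>p. Lx (X p) (V p) * (X' p - X p) \<partial>prodT)
          + (\<integral>p. Lv (X p) (V p) * (V' p - V p) \<partial>prodT)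
        = (\<integral>p. L (X p) (V p) + Lx (X p) (V p) * (X' p - X p) + Lv (X p) (V p) * (V' p - V p) \<partial>prodT)"
    by (simp only: Bochner_Integration.integral_add[OF Bochner_Integration.integrable_add[OF int_L(1) int_Lx] int_Lv]
        Bochner_Integration.integral_add[OF int_L(1) int_Lx])
  also have "\<dots> \<le> (\<integral>p. L (X' p) (V' p) \<partial>prodT)"
  proof (rule integral_mono)
    show "L (X p) (V p) + Lx (X p) (V p) * (X' p - X p) + Lv (X p) (V p) * (V' p - V p) \<le> L (X' p) (V' p)" for p
      by (rule convex_on_pair_above_tangent[OF L_deriv L_convex])
  qed (intro Bochner_Integration.integrable_add int_L int_Lx int_Lv)+
  finally show ?thesis unfolding ri[unfolded X_def X'_def V_def] X_def X'_def V_def V'_def .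
qed

lemma integral_terminal_cost_above_tangent:
  assumes v: "v \<in> \<H>" and v': "v' \<in> \<H>"
  shows "(\<integral>\<omega>. \<Psi> (state x0 v T \<omega>) \<partial>M)
         + (\<integral>\<omega>. \<Psi>' (state x0 v T \<omega>) * running_integral T (\<lambda>s \<omega>. v' s \<omega> - v s \<omega>) \<omega> \<partial>M)
         \<le> (\<integral>\<omega>. \<Psi> (state x0 v' T \<omega>) \<partial>M)"
proof -
  define X where "X = state x0 v T"
  define X' where "X' = state x0 v' T"
  have T: "T \<in> {0..T}" using T_pos by simp
  have X: "X \<in> borel_measurable M" "X' \<in> borel_measurable M"
    "integrable M (\<lambda>\<omega>. (X \<omega>)\<^sup>2)" "integrable M (\<lambda>\<omega>. (X' \<omega>)\<^sup>2)"
    unfolding X_def X'_def using state_measurable state_square_integrable v v' T by auto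
  have int_\<Psi>': "integrable M (\<lambda>\<omega>. \<Psi>' (X \<omega>) * (X' \<omega> - X \<omega>))"
    by (rule integrable_mult_of_square_integrable[OF _ _ _ integrable_square_diff[OF X(2,1,4,3)]])
       (use X Psi'_state_square_integrable[OF v] in \<open>simp_all add: X_def\<close>)
  have int_\<Psi>: "integrable M (\<lambda>\<omega>. \<Psi> (X \<omega>))" "integrable M (\<lambda>\<omega>. \<Psi> (X' \<omega>))"
    unfolding X_def X'_def using terminal_cost_integrable v v' by auto
  have ri: "(\<integral>\<omega>. \<Psi>' (X \<omega>) * running_integral T (\<lambda>s \<omega>. v' s \<omega> - v s \<omega>) \<omega> \<partial>M)
        = (\<integral>\<omega>. \<Psi>' (X \<omega>) * (X' \<omega> - X \<omega>) \<partial>M)"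
    using AE_state_diff[OF v v'] T X(1,2) running_integral_measurable[OF H_diff[OF v' v], of T]
    by (intro integral_cong_AE) (auto simp: X_def X'_def)
  have "(\<integral>\<omega>. \<Psi> (X \<omega>) \<partial>M) + (\<integral>\<omega>. \<Psi>' (X \<omega>) * (X' \<omega> - X \<omega>) \<partial>M)
        = (\<integral>\<omega>. \<Psi> (X \<omega>) + \<Psi>' (X \<omega>) * (X' \<omega> - X \<omega>) \<partial>M)"
    by (simp only: Bochner_Integration.integral_add[OF int_\<Psi>(1) int_\<Psi>'])
  also have "\<dots> \<le> (\<integral>\<omega>. \<Psi> (X' \<omega>) \<partial>M)"
  proof (rule integral_mono)
    show "\<Psi> (X \<omega>) + \<Psi>' (X \<omega>) * (X' \<omega> - X \<omega>) \<le> \<Psi> (X' \<omega>)" for \<omega>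
      using convex_on_imp_above_tangent[OF Psi_convex, of "X \<omega>" "X' \<omega>" "\<Psi>' (X \<omega>)"] Psi_deriv[of "X \<omega>"]
      by simp
  qed (intro Bochner_Integration.integrable_add int_\<Psi> int_\<Psi>')+
  finally show ?thesis using ri unfolding X_def X'_def by linarith
qed

lemma cost_I_above_tangent:
  assumes v: "v \<in> \<H>" and v': "v' \<in> \<H>"
  defines "d \<equiv> \<lambda>s \<omega>. v' s \<omega> - v s \<omega>"
  shows "cost_I M T x0 varpi L \<Psi> v
         + H_inner M T d (\<lambda>s \<omega>. Lv (state x0 v s \<omega>) (v s \<omega>)) + H_inner M T d varpi
         + (\<integral>p. Lx (state x0 v (fst p) (snd p)) (v (fst p) (snd p)) * running_integral (fst p) d (snd p) \<partial>prodT)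
         + (\<integral>\<omega>. \<Psi>' (state x0 v T \<omega>) * running_integral T d \<omega> \<partial>M)
         \<le> cost_I M T x0 varpi L \<Psi> v'"
proof -
  have "H_inner M T d varpi = (\<integral>p. varpi (fst p) (snd p) * v' (fst p) (snd p) \<partial>prodT)
                              - (\<integral>p. varpi (fst p) (snd p) * v (fst p) (snd p) \<partial>prodT)"
    unfolding d_def using H_inner_diff_left[OF v' v varpi] by (simp add: H_inner_eq mult.commute)
  moreover have "H_inner M T d (\<lambda>s \<omega>. Lv (state x0 v s \<omega>) (v s \<omega>)) =
      (\<integral>p. Lv (state x0 v (fst p) (snd p)) (v (fst p) (snd p)) * (v' (fst p) (snd p) - v (fst p) (snd p)) \<partial>prodT)"
    unfolding d_def H_inner_eq by (simp add: mult.commute)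
  ultimately show ?thesis
    using integral_Lagrangian_above_tangent[OF v v'] integral_terminal_cost_above_tangent[OF v v']
    unfolding cost_I_eq[OF v] cost_I_eq[OF v'] d_def by linarith
qed

lemma weakly_lsc_cost_I: "weakly_lsc_on \<H> (H_inner M T) (cost_I M T x0 varpi L \<Psi>)"
  unfolding weakly_lsc_on_def
proof (intro allI impI, elim conjE)
  fix vs v assume vs: "\<forall>n. vs n \<in> \<H>" and v: "v \<in> \<H>"
    and weak: "\<forall>w\<in>\<H>. (\<lambda>n. H_inner M T (vs n) w) \<longlonglongrightarrow> H_inner M T v w"
  define d where "d n = (\<lambda>s \<omega>. vs n s \<omega> - v s \<omega>)" for n
  have d: "weakly_null d"
    unfolding weakly_null_def
  proof (intro conjI allI ballI)
    show "d n \<in> \<H>" for n unfolding d_def using H_diff vs v by blast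
    fix w assume w: "w \<in> \<H>"
    have "(\<lambda>n. H_inner M T (vs n) w - H_inner M T v w) \<longlonglongrightarrow> 0"
      using weak w by (simp add: LIM_zero)
    then show "(\<lambda>n. H_inner M T (d n) w) \<longlonglongrightarrow> 0"
      unfolding d_def using H_inner_diff_left vs v w by simp
  qed
  obtain B where B: "\<And>n. H_sqnorm (d n) \<le> B" using weakly_null_bounded[OF d] by blast
  have "(\<lambda>n. H_inner M T (d n) (\<lambda>s \<omega>. Lv (state x0 v s \<omega>) (v s \<omega>)) + H_inner M T (d n) varpi
          + (\<integral>p. Lx (state x0 v (fst p) (snd p)) (v (fst p) (snd p)) * running_integral (fst p) (d n) (snd p) \<partial>prodT)
          + (\<integral>\<omega>. \<Psi>' (state x0 v T \<omega>) * running_integral T (d n) \<omega> \<partial>M)) \<longlonglongrightarrow> 0 + 0 + 0 + 0"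
    using d Lv_state_in_H[OF v] varpi
      tendsto_integral_mult_running_integral_prodT[OF square_integrable_linear_growth[OF v Lx_cont Lx_growth] d B]
      tendsto_integral_mult_running_integral[OF d B _ Psi'_state_square_integrable[OF v]]
      state_measurable[OF v] T_pos
    unfolding weakly_null_def by (intro tendsto_add) auto
  then show "ereal (cost_I M T x0 varpi L \<Psi> v) \<le> liminf (\<lambda>n. ereal (cost_I M T x0 varpi L \<Psi> (vs n)))"
    using cost_I_above_tangent[OF v] vs unfolding d_def
    by (intro ereal_le_liminf_of_le_add) (simp_all add: add.assoc)
qed

end

lemma augmented_filtration_brownian_filtration:
  assumes "brownian_motion M W" and "0 < T"
  shows "augmented_filtration M (brownian_filtration M W) T"
proof -
  have M: "prob_space M" and W: "\<And>s. 0 \<le> s \<Longrightarrow> W s \<in> borel_measurable M"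
    using assms(1) unfolding brownian_motion_def by blast+
  define G where "G t = (\<Union>s\<in>{0..t}. {W s -` B \<inter> space M | B. B \<in> sets borel}) \<union> null_sets M" for t
  have F: "brownian_filtration M W t = sigma_sets (space M) (G t)" for t
    unfolding brownian_filtration_def G_def ..
  have G_sets: "G t \<subseteq> sets M" for t
    unfolding G_def using measurable_sets[OF W] by auto
  show ?thesis
    unfolding augmented_filtration_def augmented_filtration_axioms_def F
  proof (intro conjI allI impI M assms(2))
    show "sigma_sets (space M) (G t) \<subseteq> sets M" for t
      by (rule sets.sigma_sets_subset[OF G_sets])
    show "sigma_sets (space M) (G s) \<subseteq> sigma_sets (space M) (G t)" if "s \<le> t" for s t
    proof (rule sigma_sets_mono')
      have "{0..s} \<subseteq> {0..t}" using that by auto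
      then show "G s \<subseteq> G t" unfolding G_def by blast
    qed
    show "null_sets M \<subseteq> sigma_sets (space M) (G t)" for t
      unfolding G_def by (auto intro: sigma_sets.Basic)
    show "sigma_algebra (space M) (sigma_sets (space M) (G t))" for t
      using G_sets sets.sets_into_space by (intro sigma_algebra_sigma_sets) blast
  qed
qed

theorem proposition3p1:
  fixes M :: "'a measure" and W :: "real \<Rightarrow> 'a \<Rightarrow> real"
    and T x0 :: real and varpi :: "real \<Rightarrow> 'a \<Rightarrow> real"
    and L Lx Lv :: "real \<Rightarrow> real \<Rightarrow> real" and \<Psi> \<Psi>' :: "real \<Rightarrow> real"
  assumes T_pos: "T > 0"
    and BM: "brownian_motion M W"
    and complete: "complete_space_measure M"
    and varpi: "varpi \<in> H_F M (brownian_filtration M W) T"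
    \<comment> \<open>(A1)\<close>
    and L_deriv: "\<And>x v. ((\<lambda>p. L (fst p) (snd p)) has_derivative
                     (\<lambda>h. Lx x v * fst h + Lv x v * snd h)) (at (x, v))"
    and Lx_cont: "continuous_on UNIV (\<lambda>p. Lx (fst p) (snd p))"
    and Lv_cont: "continuous_on UNIV (\<lambda>p. Lv (fst p) (snd p))"
    and L_nonneg: "\<And>x v. L x v \<ge> 0"
    and L_convex: "convex_on UNIV (\<lambda>p. L (fst p) (snd p))"
    \<comment> \<open>(A2)\<close>
    and Psi_deriv: "\<And>x. (\<Psi> has_real_derivative \<Psi>' x) (at x)"
    and Psi'_cont: "continuous_on UNIV \<Psi>'"
    and Psi_nonneg: "\<And>x. \<Psi> x \<ge> 0"
    and Psi_convex: "convex_on UNIV \<Psi>"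
    \<comment> \<open>(A3)\<close>
    and A3: "\<exists>C C'. C > 0 \<and> C' > 0 \<and>
               (\<forall>x. \<Psi> x \<le> C * (1 + \<bar>x\<bar>\<^sup>2) \<and> \<bar>\<Psi>' x\<bar> \<le> C' * (1 + \<bar>x\<bar>))"
    \<comment> \<open>(A4)\<close>
    and A4: "\<exists>\<beta> C. \<beta> > 0 \<and> C > 0 \<and>
               (\<forall>x v. L x v \<le> \<beta> * (1 + \<bar>v\<bar>\<^sup>2) \<and>
                      \<bar>Lx x v\<bar> \<le> C * (1 + \<bar>v\<bar>) \<and> \<bar>Lv x v\<bar> \<le> C * (1 + \<bar>v\<bar>))"
  shows "weakly_lsc_on (H_F M (brownian_filtration M W) T) (H_inner M T)
           (cost_I M T x0 varpi L \<Psi>)"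
proof -
  obtain C C' where A3': "\<And>x. \<Psi> x \<le> C * (1 + \<bar>x\<bar>\<^sup>2)" "\<And>x. \<bar>\<Psi>' x\<bar> \<le> C' * (1 + \<bar>x\<bar>)"
    using A3 by blast
  obtain \<beta> C\<^sub>L where A4': "\<And>x v. L x v \<le> \<beta> * (1 + \<bar>v\<bar>\<^sup>2)"
    "\<And>x v. \<bar>Lx x v\<bar> \<le> C\<^sub>L * (1 + \<bar>v\<bar>)" "\<And>x v. \<bar>Lv x v\<bar> \<le> C\<^sub>L * (1 + \<bar>v\<bar>)"
    using A4 by blast
  interpret augmented_filtration M "brownian_filtration M W" T
    by (rule augmented_filtration_brownian_filtration[OF BM T_pos])
  interpret control_problem M "brownian_filtration M W" T x0 varpi L Lx Lv \<Psi> \<Psi>' C C' \<beta> C\<^sub>L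
    using varpi L_deriv Lx_cont Lv_cont L_nonneg L_convex Psi_deriv Psi'_cont Psi_nonneg Psi_convex A3' A4'
    by unfold_locales simp_all
  show ?thesis by (rule weakly_lsc_cost_I)
qed

end
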